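(* Let $X$ be a real Banach space ordered by a generating and normal cone $K$. Let $A$ be a bounded linear operator with $A(K)\subseteq K$ which is semi-nonsupporting and such that $r(A)$ is a pole of the resolvent map $\lambda\mapsto(\lambda I-A)^{-1}$. Assume $A=T+F$, where $T,F$ are bounded linear operators with $T(K)\subseteq K$, $F(K)\subseteq K$, $r(T)<1$, and $T\neq 0$. Define $R_0:=r\big(F(I-T)^{-1}\big)$, assume $R_0>0$, and assume $R_0$ is a pole of the resolvent map of $F(I-T)^{-1}$. Then exactly one of the following holds: (a) $R_0>r(A)>1$; (b) $R_0=r(A)=1$; (c) $R_0<r(A)<1$.
   Context: A cone $K\subseteq X$ is a closed convex set such that $\alpha x\in K$ whenever $x\in K,\ \alpha\ge 0$, and such that $x\in K$, $-x\in K$ imply $x=0$. $K$ is generating if $X=K-K$, and normal if there is $\gamma>0$ such that $0\le x\le y$ implies $\|x\|\le\gamma\|y\|$, where $x\le y$ means $y-x\in K$. The dual cone is $K^*=\{f\in X^*: f(x)\ge 0\ \forall x\in K\}$. A bounded operator $B$ with $B(K)\subseteq K$ is semi-nonsupporting if for every pair $(x,f)$ with $x\in K\setminus\{0\}$, $f\in K^*\setminus\{0\}$ there is $n=n(x,f)\in\mathbb N$ with $f(B^nx)>0$. Spectrum, resolvent map $\lambda\mapsto(\lambda I-B)^{-1}$ on the resolvent set, and spectral radius $r(\cdot)$ are taken for the complexification of the operator on $X+iX$. *)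

theory Defs
  imports "HOL-Analysis.Analysis"
begin

definition is_cone :: "'a::real_normed_vector set \<Rightarrow> bool" where
  "is_cone K \<longleftrightarrow> closed K \<and> convex K \<and>
     (\<forall>x\<in>K. \<forall>\<alpha>::real. \<alpha> \<ge> 0 \<longrightarrow> \<alpha> *\<^sub>R x \<in> K) \<and>
     (\<forall>x. x \<in> K \<and> - x \<in> K \<longrightarrow> x = 0)"

definition generating_cone :: "'a::real_normed_vector set \<Rightarrow> bool" where
  "generating_cone K \<longleftrightarrow> (\<forall>x. \<exists>u\<in>K. \<exists>v\<in>K. x = u - v)"

text \<open>x \<le> y means y - x \<in> K; 0 \<le> x \<le> y implies norm x \<le> gamma * norm y.\<close>
definition normal_cone :: "'a::real_normed_vector set \<Rightarrow> bool" where
  "normal_cone K \<longleftrightarrow> (\<exists>\<gamma>>0. \<forall>x y. x \<in> K \<and> y - x \<in> K \<longrightarrow> norm x \<le> \<gamma> * norm y)"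

definition dual_cone :: "'a::real_normed_vector set \<Rightarrow> ('a \<Rightarrow>\<^sub>L real) set" where
  "dual_cone K = {f. \<forall>x\<in>K. blinfun_apply f x \<ge> 0}"

definition positive_op :: "'a::real_normed_vector set \<Rightarrow> ('a \<Rightarrow>\<^sub>L 'a) \<Rightarrow> bool" where
  "positive_op K B \<longleftrightarrow> (\<forall>x\<in>K. blinfun_apply B x \<in> K)"

definition semi_nonsupporting :: "'a::real_normed_vector set \<Rightarrow> ('a \<Rightarrow>\<^sub>L 'a) \<Rightarrow> bool" where
  "semi_nonsupporting K B \<longleftrightarrow> positive_op K B \<and>
     (\<forall>x \<in> K - {0}. \<forall>f \<in> dual_cone K - {0}. \<exists>n::nat. n \<ge> 1 \<and> blinfun_apply f ((blinfun_apply B ^^ n) x) > 0)"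

text \<open>(z I - B_C) acting on x + i y, represented as the pair (x, y).\<close>
definition cshift :: "('a::banach \<Rightarrow>\<^sub>L 'a) \<Rightarrow> complex \<Rightarrow> 'a \<times> 'a \<Rightarrow> 'a \<times> 'a" where
  "cshift B z = (\<lambda>(x, y). (Re z *\<^sub>R x - Im z *\<^sub>R y - blinfun_apply B x, Im z *\<^sub>R x + Re z *\<^sub>R y - blinfun_apply B y))"

definition in_resolvent_set :: "('a::banach \<Rightarrow>\<^sub>L 'a) \<Rightarrow> complex \<Rightarrow> bool" where
  "in_resolvent_set B z \<longleftrightarrow>
     (\<exists>S :: ('a \<times> 'a) \<Rightarrow>\<^sub>L ('a \<times> 'a). (\<forall>p. blinfun_apply S (cshift B z p) = p) \<and> (\<forall>p. cshift B z (blinfun_apply S p) = p))"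

definition op_spectrum :: "('a::banach \<Rightarrow>\<^sub>L 'a) \<Rightarrow> complex set" where
  "op_spectrum B = {z. \<not> in_resolvent_set B z}"

definition op_spectral_radius :: "('a::banach \<Rightarrow>\<^sub>L 'a) \<Rightarrow> real" where
  "op_spectral_radius B = Sup (cmod ` op_spectrum B)"

text \<open>The resolvent (z I - B_C)^{-1} (meaningful on the resolvent set).\<close>
definition resolvent :: "('a::banach \<Rightarrow>\<^sub>L 'a) \<Rightarrow> complex \<Rightarrow> ('a \<times> 'a) \<Rightarrow>\<^sub>L ('a \<times> 'a)" where
  "resolvent B z = (SOME S. (\<forall>p. blinfun_apply S (cshift B z p) = p) \<and> (\<forall>p. cshift B z (blinfun_apply S p) = p))"

text \<open>z0 is a pole of the resolvent: an isolated point of the spectrum near which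
  (z - z0)^m (zI - B)^{-1} stays bounded for some m (finitely many negative Laurent terms).\<close>
definition resolvent_pole :: "('a::banach \<Rightarrow>\<^sub>L 'a) \<Rightarrow> complex \<Rightarrow> bool" where
  "resolvent_pole B z0 \<longleftrightarrow> z0 \<in> op_spectrum B \<and>
     (\<exists>\<epsilon>>0. op_spectrum B \<inter> ball z0 \<epsilon> = {z0} \<and>
        (\<exists>m::nat. \<exists>C. \<forall>z \<in> ball z0 \<epsilon> - {z0}. cmod (z - z0) ^ m * norm (resolvent B z) \<le> C))"

definition op_inverse :: "('a::banach \<Rightarrow>\<^sub>L 'a) \<Rightarrow> 'a \<Rightarrow>\<^sub>L 'a" where
  "op_inverse B = (SOME S. S o\<^sub>L B = id_blinfun \<and> B o\<^sub>L S = id_blinfun)"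

end

(* Let B be a positive operator whose resolvent has a pole at r(B), of order k.
   The leading Laurent coefficient Q = lim (z - r(B))^k (z - B)^-1 is nonzero and satisfies
   (B - r(B)) Q = Q (B - r(B)) = 0.  It is positive: for real t > r(B) the resolvent is positive,
   since it is a Neumann series for large t and positivity propagates downwards along the real
   axis by the resolvent expansion, and Q is a limit along such t.  Its real part P is thus a
   nonzero positive operator with BP = PB = r(B) P.

   For A this gives a positive functional f with f o A = r(A) f, and f is strictly positive on
   K - {0} because A is semi-nonsupporting.  For F (I - T)^-1 it gives y in K - {0} with
   F (I - T)^-1 y = R0 y.  Put x = (I - T)^-1 y, a positive vector with x - Tx = y and
   Ax = Tx + R0 y.  Here Tx is nonzero, since otherwise x would be an eigenvector of A killed by
   the positive operator T, and semi-nonsupporting forces T = 0.  Applying f, the positive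
   numbers a = f x, b = f (Tx), c = f y satisfy (r(A) - R0) a = (1 - R0) b and
   (1 - r(A)) a = (1 - R0) c, and the signs give the trichotomy. *)

theory Submission
  imports Defs "HOL-Complex_Analysis.Complex_Analysis"
begin

section \<open>Hahn--Banach\<close>

definition sublinear :: "('a::real_vector \<Rightarrow> real) \<Rightarrow> bool" where
  "sublinear p \<longleftrightarrow> (\<forall>x y. p (x + y) \<le> p x + p y) \<and> (\<forall>c x. c \<ge> 0 \<longrightarrow> p (c *\<^sub>R x) = c * p x)"

lemma sublinearD:
  assumes "sublinear p"
  shows sublinear_add: "p (x + y) \<le> p x + p y"
    and sublinear_scaleR: "c \<ge> 0 \<Longrightarrow> p (c *\<^sub>R x) = c * p x"
  using assms unfolding sublinear_def by blast+

lemma sublinear_zero: "sublinear p \<Longrightarrow> p 0 = 0"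
  using sublinear_scaleR[of p 0 0] by simp

lemma sublinear_scaleR_ge:
  assumes p: "sublinear p"
  shows "c * p x \<le> p (c *\<^sub>R x)"
proof (cases "c \<ge> 0")
  case True
  then show ?thesis using sublinear_scaleR[OF p] by simp
next
  case False
  have "- p x \<le> p (- x)"
    using sublinear_add[OF p, of x "- x"] sublinear_zero[OF p] by simp
  then have "(- c) * (- p x) \<le> (- c) * p (- x)"
    using False by (intro mult_left_mono) auto
  also have "\<dots> = p (c *\<^sub>R x)"
    using sublinear_scaleR[OF p, of "- c" "- x"] False by simp
  finally show ?thesis by simp
qed

text \<open>A linear functional on a subspace is handled through its graph, so that Zorn's lemma
  can be applied to the inclusion order on sets of pairs.\<close>

definition dominated_graph :: "('a::real_vector \<Rightarrow> real) \<Rightarrow> 'a \<Rightarrow> ('a \<times> real) set \<Rightarrow> bool" where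
  "dominated_graph p w G \<longleftrightarrow>
     (\<forall>x a b. (x, a) \<in> G \<longrightarrow> (x, b) \<in> G \<longrightarrow> a = b) \<and> (w, p w) \<in> G \<and>
     (\<forall>x a y b. (x, a) \<in> G \<longrightarrow> (y, b) \<in> G \<longrightarrow> (x + y, a + b) \<in> G) \<and>
     (\<forall>x a c. (x, a) \<in> G \<longrightarrow> (c *\<^sub>R x, c * a) \<in> G) \<and> (\<forall>x a. (x, a) \<in> G \<longrightarrow> a \<le> p x)"

lemma dominated_graphD:
  assumes "dominated_graph p w G"
  shows dominated_graph_unique: "(x, a) \<in> G \<Longrightarrow> (x, b) \<in> G \<Longrightarrow> a = b"
    and dominated_graph_point: "(w, p w) \<in> G"
    and dominated_graph_add: "(x, a) \<in> G \<Longrightarrow> (y, b) \<in> G \<Longrightarrow> (x + y, a + b) \<in> G"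
    and dominated_graph_scaleR: "(x, a) \<in> G \<Longrightarrow> (c *\<^sub>R x, c * a) \<in> G"
    and dominated_graph_le: "(x, a) \<in> G \<Longrightarrow> a \<le> p x"
  using assms unfolding dominated_graph_def by blast+

lemma dominated_graph_line:
  assumes p: "sublinear p"
  shows "dominated_graph p w {(c *\<^sub>R w, c * p w) | c. True}"
  unfolding dominated_graph_def
proof (intro conjI allI impI)
  fix x a b
  assume "(x, a) \<in> {(c *\<^sub>R w, c * p w) |c. True}" "(x, b) \<in> {(c *\<^sub>R w, c * p w) |c. True}"
  then obtain c d where cd: "x = c *\<^sub>R w" "a = c * p w" "x = d *\<^sub>R w" "b = d * p w" by blast
  show "a = b"
  proof (cases "w = 0")
    case True
    then show ?thesis using cd sublinear_zero[OF p] by simp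
  next
    case False
    then have "c = d" using cd by (metis scaleR_cancel_right)
    then show ?thesis using cd by simp
  qed
next
  show "(w, p w) \<in> {(c *\<^sub>R w, c * p w) |c. True}"
    by (rule CollectI, rule exI[of _ 1]) simp
next
  fix x a y b
  assume "(x, a) \<in> {(c *\<^sub>R w, c * p w) |c. True}" "(y, b) \<in> {(c *\<^sub>R w, c * p w) |c. True}"
  then obtain c d where "x = c *\<^sub>R w" "a = c * p w" "y = d *\<^sub>R w" "b = d * p w" by auto
  then show "(x + y, a + b) \<in> {(c *\<^sub>R w, c * p w) |c. True}"
    by (intro CollectI exI[of _ "c + d"]) (simp add: scaleR_add_left distrib_right)
next
  fix x a c
  assume "(x, a) \<in> {(c *\<^sub>R w, c * p w) |c. True}"
  then obtain d where "x = d *\<^sub>R w" "a = d * p w" by auto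
  then show "(c *\<^sub>R x, c * a) \<in> {(c *\<^sub>R w, c * p w) |c. True}"
    by (intro CollectI exI[of _ "c * d"]) simp
next
  fix x a
  assume "(x, a) \<in> {(c *\<^sub>R w, c * p w) |c. True}"
  then obtain d where "x = d *\<^sub>R w" "a = d * p w" by auto
  then show "a \<le> p x" using sublinear_scaleR_ge[OF p, of d w] by simp
qed

lemma dominated_graph_Union_chain:
  assumes C: "C \<in> chains {G. dominated_graph p w G}" and ne: "C \<noteq> {}"
  shows "dominated_graph p w (\<Union>C)"
proof -
  have dom: "\<And>G. G \<in> C \<Longrightarrow> dominated_graph p w G"
    using C by (auto simp: chains_def)
  have two: "\<exists>H\<in>C. (x, a) \<in> H \<and> (y, b) \<in> H" if xy: "(x, a) \<in> \<Union>C" "(y, b) \<in> \<Union>C" for x a y b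
  proof -
    obtain G H where GH: "G \<in> C" "H \<in> C" "(x, a) \<in> G" "(y, b) \<in> H" using xy by blast
    have "G \<subseteq> H \<or> H \<subseteq> G" using C GH(1,2) by (auto simp: chains_def chain_subset_def)
    then show ?thesis using GH by blast
  qed
  show ?thesis
    unfolding dominated_graph_def
  proof (intro conjI allI impI)
    fix x a b assume "(x, a) \<in> \<Union>C" "(x, b) \<in> \<Union>C"
    then obtain H where "H \<in> C" "(x, a) \<in> H" "(x, b) \<in> H" using two by blast
    then show "a = b" using dom dominated_graph_unique by blast
  next
    show "(w, p w) \<in> \<Union>C" using ne dom dominated_graph_point by blast
  next
    fix x a y b assume "(x, a) \<in> \<Union>C" "(y, b) \<in> \<Union>C"
    then obtain H where "H \<in> C" "(x, a) \<in> H" "(y, b) \<in> H" using two by blast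
    then show "(x + y, a + b) \<in> \<Union>C" using dom dominated_graph_add by blast
  next
    fix x a c assume "(x, a) \<in> \<Union>C"
    then show "(c *\<^sub>R x, c * a) \<in> \<Union>C" using dom dominated_graph_scaleR by blast
  next
    fix x a assume "(x, a) \<in> \<Union>C"
    then show "a \<le> p x" using dom dominated_graph_le by blast
  qed
qed

lemma dominated_graph_extension_value:
  assumes p: "sublinear p" and M: "dominated_graph p w M"
  obtains \<xi> where "\<And>y a. (y, a) \<in> M \<Longrightarrow> a - p (y - x\<^sub>0) \<le> \<xi>"
    and "\<And>z b. (z, b) \<in> M \<Longrightarrow> \<xi> \<le> p (z + x\<^sub>0) - b"
proof -
  define S where "S = {a - p (y - x\<^sub>0) | y a. (y, a) \<in> M}"
  have below: "a - p (y - x\<^sub>0) \<le> p (z + x\<^sub>0) - b" if "(y, a) \<in> M" "(z, b) \<in> M" for y a z b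
  proof -
    have "a + b \<le> p (y + z)"
      using that dominated_graph_add[OF M] dominated_graph_le[OF M] by blast
    also have "\<dots> = p ((y - x\<^sub>0) + (z + x\<^sub>0))" by simp
    also have "\<dots> \<le> p (y - x\<^sub>0) + p (z + x\<^sub>0)" by (rule sublinear_add[OF p])
    finally show ?thesis by simp
  qed
  have "S \<noteq> {}" using dominated_graph_point[OF M] unfolding S_def by blast
  moreover have "bdd_above S"
    unfolding S_def bdd_above_def using below[OF _ dominated_graph_point[OF M]] by blast
  ultimately show thesis
    using below by (intro that[of "Sup S"] cSup_upper cSup_least) (auto simp: S_def)
qed

lemma dominated_graph_extension_le:
  assumes p: "sublinear p" and M: "dominated_graph p w M"
    and lo: "\<And>y a. (y, a) \<in> M \<Longrightarrow> a - p (y - x\<^sub>0) \<le> \<xi>"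
    and hi: "\<And>z b. (z, b) \<in> M \<Longrightarrow> \<xi> \<le> p (z + x\<^sub>0) - b"
    and ya: "(y, a) \<in> M"
  shows "a + t * \<xi> \<le> p (y + t *\<^sub>R x\<^sub>0)"
proof (cases t "0::real" rule: linorder_cases)
  case equal
  then show ?thesis using dominated_graph_le[OF M ya] by simp
next
  case greater
  have "((1 / t) *\<^sub>R y, (1 / t) * a) \<in> M" using dominated_graph_scaleR[OF M ya] .
  moreover have "(1 / t) *\<^sub>R y + x\<^sub>0 = (1 / t) *\<^sub>R (y + t *\<^sub>R x\<^sub>0)"
    using greater by (simp add: algebra_simps)
  ultimately have "\<xi> \<le> p ((1 / t) *\<^sub>R (y + t *\<^sub>R x\<^sub>0)) - (1 / t) * a"
    using hi by metis
  also have "\<dots> = (1 / t) * (p (y + t *\<^sub>R x\<^sub>0) - a)"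
    using sublinear_scaleR[OF p, of "1 / t"] greater by (simp add: right_diff_distrib)
  finally show ?thesis using greater by (simp add: field_simps)
next
  case less
  have "((- 1 / t) *\<^sub>R y, (- 1 / t) * a) \<in> M" using dominated_graph_scaleR[OF M ya] .
  moreover have "(- 1 / t) *\<^sub>R y - x\<^sub>0 = (- 1 / t) *\<^sub>R (y + t *\<^sub>R x\<^sub>0)"
    using less by (simp add: algebra_simps)
  ultimately have "(- 1 / t) * a - p ((- 1 / t) *\<^sub>R (y + t *\<^sub>R x\<^sub>0)) \<le> \<xi>"
    using lo by metis
  moreover have "p ((- 1 / t) *\<^sub>R (y + t *\<^sub>R x\<^sub>0)) = (- 1 / t) * p (y + t *\<^sub>R x\<^sub>0)"
    using sublinear_scaleR[OF p, of "- 1 / t"] less by (simp add: divide_nonneg_neg)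
  ultimately show ?thesis using less by (simp add: field_simps)
qed

definition graph_extension :: "('a::real_vector \<times> real) set \<Rightarrow> 'a \<Rightarrow> real \<Rightarrow> ('a \<times> real) set" where
  "graph_extension M x\<^sub>0 \<xi> = {(y + t *\<^sub>R x\<^sub>0, a + t * \<xi>) | y a t. (y, a) \<in> M}"

lemma graph_extension_unique:
  assumes M: "dominated_graph p w M" and x\<^sub>0: "\<And>a. (x\<^sub>0, a) \<notin> M"
    and "(x, a) \<in> graph_extension M x\<^sub>0 \<xi>" "(x, b) \<in> graph_extension M x\<^sub>0 \<xi>"
  shows "a = b"
proof -
  obtain y\<^sub>1 a\<^sub>1 t\<^sub>1 where e1: "x = y\<^sub>1 + t\<^sub>1 *\<^sub>R x\<^sub>0" "a = a\<^sub>1 + t\<^sub>1 * \<xi>" "(y\<^sub>1, a\<^sub>1) \<in> M"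
    using assms(3) unfolding graph_extension_def by blast
  obtain y\<^sub>2 a\<^sub>2 t\<^sub>2 where e2: "x = y\<^sub>2 + t\<^sub>2 *\<^sub>R x\<^sub>0" "b = a\<^sub>2 + t\<^sub>2 * \<xi>" "(y\<^sub>2, a\<^sub>2) \<in> M"
    using assms(4) unfolding graph_extension_def by blast
  note e = e1 e2
  have "t\<^sub>1 = t\<^sub>2"
  proof (rule ccontr)
    assume ne: "t\<^sub>1 \<noteq> t\<^sub>2"
    have "(y\<^sub>1 + (- 1) *\<^sub>R y\<^sub>2, a\<^sub>1 + (- 1) * a\<^sub>2) \<in> M"
      using e dominated_graph_add[OF M] dominated_graph_scaleR[OF M] by blast
    then have "((1 / (t\<^sub>2 - t\<^sub>1)) *\<^sub>R (y\<^sub>1 + (- 1) *\<^sub>R y\<^sub>2), (1 / (t\<^sub>2 - t\<^sub>1)) * (a\<^sub>1 + (- 1) * a\<^sub>2)) \<in> M"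
      by (rule dominated_graph_scaleR[OF M])
    moreover have "y\<^sub>1 - y\<^sub>2 = (t\<^sub>2 - t\<^sub>1) *\<^sub>R x\<^sub>0" using e by (simp add: algebra_simps)
    ultimately show False using x\<^sub>0 ne by simp
  qed
  then show "a = b" using e dominated_graph_unique[OF M] by simp
qed

lemma dominated_graph_extension:
  assumes p: "sublinear p" and M: "dominated_graph p w M" and x\<^sub>0: "\<And>a. (x\<^sub>0, a) \<notin> M"
    and lo: "\<And>y a. (y, a) \<in> M \<Longrightarrow> a - p (y - x\<^sub>0) \<le> \<xi>"
    and hi: "\<And>z b. (z, b) \<in> M \<Longrightarrow> \<xi> \<le> p (z + x\<^sub>0) - b"
  shows "dominated_graph p w (graph_extension M x\<^sub>0 \<xi>)"
  unfolding dominated_graph_def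
proof (intro conjI allI impI)
  fix x a b assume "(x, a) \<in> graph_extension M x\<^sub>0 \<xi>" "(x, b) \<in> graph_extension M x\<^sub>0 \<xi>"
  then show "a = b" by (rule graph_extension_unique[OF M x\<^sub>0])
next
  show "(w, p w) \<in> graph_extension M x\<^sub>0 \<xi>"
    unfolding graph_extension_def using dominated_graph_point[OF M] by force
next
  fix x a y b assume "(x, a) \<in> graph_extension M x\<^sub>0 \<xi>" "(y, b) \<in> graph_extension M x\<^sub>0 \<xi>"
  then obtain y\<^sub>1 a\<^sub>1 t\<^sub>1 y\<^sub>2 a\<^sub>2 t\<^sub>2 where e: "x = y\<^sub>1 + t\<^sub>1 *\<^sub>R x\<^sub>0" "a = a\<^sub>1 + t\<^sub>1 * \<xi>" "(y\<^sub>1, a\<^sub>1) \<in> M"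
    "y = y\<^sub>2 + t\<^sub>2 *\<^sub>R x\<^sub>0" "b = a\<^sub>2 + t\<^sub>2 * \<xi>" "(y\<^sub>2, a\<^sub>2) \<in> M"
    unfolding graph_extension_def by blast
  have "(y\<^sub>1 + y\<^sub>2, a\<^sub>1 + a\<^sub>2) \<in> M" using e dominated_graph_add[OF M] by blast
  moreover have "x + y = (y\<^sub>1 + y\<^sub>2) + (t\<^sub>1 + t\<^sub>2) *\<^sub>R x\<^sub>0" "a + b = (a\<^sub>1 + a\<^sub>2) + (t\<^sub>1 + t\<^sub>2) * \<xi>"
    using e by (simp_all add: algebra_simps)
  ultimately show "(x + y, a + b) \<in> graph_extension M x\<^sub>0 \<xi>" unfolding graph_extension_def by blast
next
  fix x a c assume "(x, a) \<in> graph_extension M x\<^sub>0 \<xi>"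
  then obtain y a\<^sub>1 t where e: "x = y + t *\<^sub>R x\<^sub>0" "a = a\<^sub>1 + t * \<xi>" "(y, a\<^sub>1) \<in> M"
    unfolding graph_extension_def by blast
  have "(c *\<^sub>R y, c * a\<^sub>1) \<in> M" using e dominated_graph_scaleR[OF M] by blast
  moreover have "c *\<^sub>R x = c *\<^sub>R y + (c * t) *\<^sub>R x\<^sub>0" "c * a = c * a\<^sub>1 + (c * t) * \<xi>"
    using e by (simp_all add: algebra_simps)
  ultimately show "(c *\<^sub>R x, c * a) \<in> graph_extension M x\<^sub>0 \<xi>" unfolding graph_extension_def by blast
next
  fix x a assume "(x, a) \<in> graph_extension M x\<^sub>0 \<xi>"
  then show "a \<le> p x"
    unfolding graph_extension_def using dominated_graph_extension_le[OF p M lo hi] by blast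
qed

lemma dominated_graph_extend:
  assumes p: "sublinear p" and M: "dominated_graph p w M" and x\<^sub>0: "\<And>a. (x\<^sub>0, a) \<notin> M"
  shows "\<exists>M'. dominated_graph p w M' \<and> M \<subset> M'"
proof -
  obtain \<xi> where lo: "\<And>y a. (y, a) \<in> M \<Longrightarrow> a - p (y - x\<^sub>0) \<le> \<xi>"
    and hi: "\<And>z b. (z, b) \<in> M \<Longrightarrow> \<xi> \<le> p (z + x\<^sub>0) - b"
    using dominated_graph_extension_value[OF p M] by blast
  have "M \<subseteq> graph_extension M x\<^sub>0 \<xi>"
  proof
    fix q assume "q \<in> M"
    moreover obtain y a where "q = (y, a)" by fastforce
    ultimately show "q \<in> graph_extension M x\<^sub>0 \<xi>"
      unfolding graph_extension_def by (intro CollectI exI[of _ y] exI[of _ a] exI[of _ 0]) simp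
  qed
  moreover have "(x\<^sub>0, \<xi>) \<in> graph_extension M x\<^sub>0 \<xi>"
  proof -
    have "(0 *\<^sub>R w, 0 * p w) \<in> M" using dominated_graph_scaleR[OF M dominated_graph_point[OF M]] .
    then show ?thesis
      unfolding graph_extension_def by (intro CollectI exI[of _ 0] exI[of _ 0] exI[of _ 1]) simp
  qed
  moreover have "(x\<^sub>0, \<xi>) \<notin> M" by (rule x\<^sub>0)
  ultimately have "M \<subset> graph_extension M x\<^sub>0 \<xi>" by blast
  with dominated_graph_extension[OF p M x\<^sub>0 lo hi] show ?thesis by blast
qed

lemma dominated_graph_chain_bound:
  assumes p: "sublinear p"
  shows "\<forall>C\<in>chains {G. dominated_graph p w G}. \<exists>U\<in>{G. dominated_graph p w G}. \<forall>X\<in>C. X \<subseteq> U"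
proof
  fix C assume C: "C \<in> chains {G. dominated_graph p w G}"
  show "\<exists>U\<in>{G. dominated_graph p w G}. \<forall>X\<in>C. X \<subseteq> U"
  proof (cases "C = {}")
    case True
    then show ?thesis using dominated_graph_line[OF p] by blast
  next
    case False
    then show ?thesis using dominated_graph_Union_chain[OF C] by blast
  qed
qed

theorem hahn_banach_sublinear:
  fixes p :: "'a::real_vector \<Rightarrow> real"
  assumes p: "sublinear p"
  shows "\<exists>f. linear f \<and> (\<forall>x. f x \<le> p x) \<and> f w = p w"
proof -
  from Zorn_Lemma2[OF dominated_graph_chain_bound[OF p, of w]] obtain M where M: "dominated_graph p w M"
    and max: "\<And>X. dominated_graph p w X \<Longrightarrow> M \<subseteq> X \<Longrightarrow> X = M" by blast
  have total: "\<exists>a. (x, a) \<in> M" for x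
  proof (rule ccontr)
    assume "\<nexists>a. (x, a) \<in> M"
    then obtain M' where "dominated_graph p w M'" "M \<subset> M'"
      using dominated_graph_extend[OF p M] by blast
    then show False using max[of M'] by blast
  qed
  define f where "f x = (THE a. (x, a) \<in> M)" for x
  have graph: "(x, a) \<in> M \<Longrightarrow> f x = a" for x a
    unfolding f_def using dominated_graph_unique[OF M] by blast
  have in_graph: "(x, f x) \<in> M" for x
    using total[of x] graph by blast
  have "linear f"
  proof (rule linearI)
    show "f (x + y) = f x + f y" for x y
      by (rule graph, rule dominated_graph_add[OF M in_graph in_graph])
    show "f (c *\<^sub>R x) = c *\<^sub>R f x" for c x
      using graph[OF dominated_graph_scaleR[OF M in_graph]] by simp
  qed
  then show ?thesis
    using in_graph graph dominated_graph_le[OF M] dominated_graph_point[OF M] by metis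
qed

lemma bounded_linear_if_le_norm:
  assumes f: "linear f" and le: "\<And>x. f x \<le> C * norm x"
  shows "bounded_linear f" and "\<bar>f x\<bar> \<le> C * norm x"
proof -
  have abs: "\<bar>f y\<bar> \<le> C * norm y" for y
    using le[of y] le[of "- y"] f by (simp add: linear_neg abs_le_iff)
  then show "\<bar>f x\<bar> \<le> C * norm x" .
  show "bounded_linear f"
    using f abs by (intro bounded_linear_intro[of f C]) (auto simp: linear_add linear_scale mult.commute)
qed

lemma exists_norming_functional:
  fixes v :: "'a::real_normed_vector"
  shows "\<exists>\<phi> :: 'a \<Rightarrow>\<^sub>L real. norm \<phi> \<le> 1 \<and> blinfun_apply \<phi> v = norm v"
proof -
  have "sublinear (norm :: 'a \<Rightarrow> real)"
    unfolding sublinear_def by (auto simp: norm_triangle_ineq)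
  then obtain f where f: "linear f" "\<And>x. f x \<le> norm x" "f v = norm v"
    using hahn_banach_sublinear by blast
  note bl = bounded_linear_if_le_norm[of f 1, OF f(1)]
  have "norm (Blinfun f) \<le> 1"
    using bl by (intro norm_blinfun_bound) (auto simp: bounded_linear_Blinfun_apply f(2))
  then show ?thesis
    using bl f(2,3) by (intro exI[of _ "Blinfun f"]) (simp add: bounded_linear_Blinfun_apply)
qed

lemma infdist_greatest: "A \<noteq> {} \<Longrightarrow> (\<And>a. a \<in> A \<Longrightarrow> d \<le> dist x a) \<Longrightarrow> d \<le> infdist x A"
  by (simp add: infdist_notempty cINF_greatest)

lemma infdist_add_le:
  fixes K :: "'a::real_normed_vector set"
  assumes ne: "K \<noteq> {}" and add: "\<And>x y. x \<in> K \<Longrightarrow> y \<in> K \<Longrightarrow> x + y \<in> K"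
  shows "infdist (x + y) K \<le> infdist x K + infdist y K"
proof -
  have "infdist (x + y) K - dist y k\<^sub>2 \<le> dist x k\<^sub>1" if "k\<^sub>1 \<in> K" "k\<^sub>2 \<in> K" for k\<^sub>1 k\<^sub>2
    using infdist_le[OF add[OF that], of "x + y"] dist_triangle_add[of x y k\<^sub>1 k\<^sub>2] by simp
  then have "infdist (x + y) K - dist y k\<^sub>2 \<le> infdist x K" if "k\<^sub>2 \<in> K" for k\<^sub>2
    using that ne by (intro infdist_greatest) auto
  then have "infdist (x + y) K - infdist x K \<le> infdist y K"
    using ne by (intro infdist_greatest) (auto simp: algebra_simps)
  then show ?thesis by simp
qed

lemma infdist_scaleR:
  fixes K :: "'a::real_normed_vector set"
  assumes zero: "0 \<in> K" and scale: "\<And>c x. c \<ge> 0 \<Longrightarrow> x \<in> K \<Longrightarrow> c *\<^sub>R x \<in> K" and c: "0 \<le> c"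
  shows "infdist (c *\<^sub>R x) K = c * infdist x K"
proof (cases "c = 0")
  case True
  then show ?thesis using zero by simp
next
  case False
  with c have c: "c > 0" by simp
  have scale_dist: "dist (c *\<^sub>R u) (c *\<^sub>R v) = c * dist u v" for u v :: 'a
    using c by (simp add: dist_norm flip: scaleR_diff_right)
  have "infdist (c *\<^sub>R x) K \<le> c * dist x k" if "k \<in> K" for k
    using infdist_le[OF scale[OF less_imp_le[OF c] that], of "c *\<^sub>R x"] scale_dist by simp
  then have "infdist (c *\<^sub>R x) K / c \<le> infdist x K"
    using zero c by (intro infdist_greatest) (auto simp: divide_le_eq mult.commute)
  moreover have "c * infdist x K \<le> dist (c *\<^sub>R x) k" if "k \<in> K" for k
  proof -
    have "infdist x K \<le> dist x ((1 / c) *\<^sub>R k)"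
      using c that by (intro infdist_le scale) auto
    moreover have "dist (c *\<^sub>R x) k = c * dist x ((1 / c) *\<^sub>R k)"
      using scale_dist[of x "(1 / c) *\<^sub>R k"] c by simp
    ultimately show ?thesis using c by simp
  qed
  then have "c * infdist x K \<le> infdist (c *\<^sub>R x) K"
    using zero by (intro infdist_greatest) auto
  ultimately show ?thesis using c by (simp add: divide_le_eq mult.commute)
qed

lemma sublinear_infdist_cone:
  fixes K :: "'a::real_normed_vector set"
  assumes zero: "0 \<in> K" and add: "\<And>x y. x \<in> K \<Longrightarrow> y \<in> K \<Longrightarrow> x + y \<in> K"
    and scale: "\<And>c x. c \<ge> 0 \<Longrightarrow> x \<in> K \<Longrightarrow> c *\<^sub>R x \<in> K"
  shows "sublinear (\<lambda>x. infdist x K)"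
  unfolding sublinear_def
proof (intro conjI allI impI)
  show "infdist (x + y) K \<le> infdist x K + infdist y K" for x y
    using zero by (intro infdist_add_le add) auto
  show "infdist (c *\<^sub>R x) K = c * infdist x K" if "0 \<le> c" for c and x :: 'a
    by (rule infdist_scaleR[OF zero scale that])
qed

definition closed_wedge :: "'a::real_normed_vector set \<Rightarrow> bool" where
  "closed_wedge K \<longleftrightarrow> closed K \<and> 0 \<in> K \<and> (\<forall>x\<in>K. \<forall>y\<in>K. x + y \<in> K) \<and>
     (\<forall>c x. c \<ge> 0 \<longrightarrow> x \<in> K \<longrightarrow> c *\<^sub>R x \<in> K)"

lemma exists_separating_functional:
  fixes K :: "'a::real_normed_vector set"
  assumes K: "closed_wedge K" and w: "w \<notin> K"
  shows "\<exists>\<phi> :: 'a \<Rightarrow>\<^sub>L real. (\<forall>k\<in>K. blinfun_apply \<phi> k \<ge> 0) \<and> blinfun_apply \<phi> w < 0"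
proof -
  have zero: "0 \<in> K" and "closed K" using K by (auto simp: closed_wedge_def)
  have "sublinear (\<lambda>x. infdist x K)"
    using K unfolding closed_wedge_def by (intro sublinear_infdist_cone) auto
  then obtain f where f: "linear f" "\<And>x. f x \<le> infdist x K" "f w = infdist w K"
    using hahn_banach_sublinear by blast
  have "f x \<le> 1 * norm x" for x
    using f(2)[of x] infdist_le[OF zero, of x] by simp
  then have bl: "bounded_linear (\<lambda>x. - f x)"
    by (intro bounded_linear_minus bounded_linear_if_le_norm(1)[OF f(1)])
  have "f k \<le> 0" if "k \<in> K" for k using f(2)[of k] that by simp
  moreover have "infdist w K > 0"
    using infdist_pos_not_in_closed[OF \<open>closed K\<close> _ w] zero by blast
  ultimately show ?thesis
    using bl f(3) by (intro exI[of _ "Blinfun (\<lambda>x. - f x)"]) (auto simp: bounded_linear_Blinfun_apply)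
qed

section \<open>Neumann series\<close>

lemmas blinfun_compose_diff_left = bounded_bilinear.diff_left[OF bounded_bilinear_blinfun_compose]
lemmas blinfun_compose_diff_right = bounded_bilinear.diff_right[OF bounded_bilinear_blinfun_compose]

lemma blinfun_compose_assoc: "(a o\<^sub>L b) o\<^sub>L c = a o\<^sub>L (b o\<^sub>L c)"
  by (rule blinfun_eqI) simp

lemma blinfun_compose_id [simp]: "id_blinfun o\<^sub>L a = a" "a o\<^sub>L id_blinfun = a"
  by (auto intro: blinfun_eqI)

primrec blinfun_pow :: "('a::real_normed_vector \<Rightarrow>\<^sub>L 'a) \<Rightarrow> nat \<Rightarrow> 'a \<Rightarrow>\<^sub>L 'a" where
  "blinfun_pow E 0 = id_blinfun"
| "blinfun_pow E (Suc n) = E o\<^sub>L blinfun_pow E n"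

lemma blinfun_pow_commute: "blinfun_pow E n o\<^sub>L E = E o\<^sub>L blinfun_pow E n"
  by (induction n) (simp_all add: blinfun_compose_assoc)

lemma norm_blinfun_pow_le: "norm (blinfun_pow E n) \<le> norm E ^ n"
proof (induction n)
  case 0
  then show ?case using norm_blinfun_id_le by simp
next
  case (Suc n)
  have "norm (blinfun_pow E (Suc n)) \<le> norm E * norm (blinfun_pow E n)"
    by (simp add: norm_blinfun_compose)
  also have "\<dots> \<le> norm E * norm E ^ n" using Suc by (intro mult_left_mono) auto
  finally show ?case by simp
qed

definition is_inverse :: "('a::real_normed_vector \<Rightarrow>\<^sub>L 'a) \<Rightarrow> ('a \<Rightarrow>\<^sub>L 'a) \<Rightarrow> bool" where
  "is_inverse M S \<longleftrightarrow> S o\<^sub>L M = id_blinfun \<and> M o\<^sub>L S = id_blinfun"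

lemma left_inverse_eq_right_inverse:
  assumes "S o\<^sub>L M = id_blinfun" "M o\<^sub>L S' = id_blinfun"
  shows "S = S'"
  by (metis assms blinfun_compose_assoc blinfun_compose_id)

lemma is_inverse_unique: "is_inverse M S \<Longrightarrow> is_inverse M S' \<Longrightarrow> S = S'"
  unfolding is_inverse_def using left_inverse_eq_right_inverse by blast

lemma neumann_series:
  fixes E :: "'a::banach \<Rightarrow>\<^sub>L 'a"
  assumes E: "norm E < 1"
  defines "N \<equiv> suminf (blinfun_pow E)"
  shows "summable (blinfun_pow E)" and "is_inverse (id_blinfun - E) N"
    and "norm N \<le> 1 / (1 - norm E)" and "N - id_blinfun = E o\<^sub>L N"
proof -
  have geometric: "summable (\<lambda>n. norm E ^ n)" using E by (simp add: summable_geometric)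
  have norm_summable: "summable (\<lambda>n. norm (blinfun_pow E n))"
    by (rule summable_comparison_test[OF _ geometric]) (auto intro: norm_blinfun_pow_le)
  then show summable: "summable (blinfun_pow E)" by (rule summable_norm_cancel)
  have "(\<lambda>n. norm E ^ n) \<longlonglongrightarrow> 0" using E by (intro LIMSEQ_power_zero) auto
  then have "blinfun_pow E \<longlonglongrightarrow> 0"
    by (rule Lim_null_comparison[rotated]) (auto intro: always_eventually norm_blinfun_pow_le)
  then have telescope: "(\<lambda>n. blinfun_pow E n - blinfun_pow E (Suc n)) sums id_blinfun"
    using telescope_sums'[of "blinfun_pow E" 0] by simp
  have "(\<lambda>n. (id_blinfun - E) o\<^sub>L blinfun_pow E n) sums ((id_blinfun - E) o\<^sub>L N)"
    unfolding N_def using summable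
    by (intro bounded_linear.sums[OF bounded_bilinear.bounded_linear_right[OF bounded_bilinear_blinfun_compose]])
       (rule summable_sums)
  then have right: "(id_blinfun - E) o\<^sub>L N = id_blinfun"
    using telescope sums_unique2 by (simp add: blinfun_compose_diff_left)
  have "(\<lambda>n. blinfun_pow E n o\<^sub>L (id_blinfun - E)) sums (N o\<^sub>L (id_blinfun - E))"
    unfolding N_def using summable
    by (intro bounded_linear.sums[OF bounded_bilinear.bounded_linear_left[OF bounded_bilinear_blinfun_compose]])
       (rule summable_sums)
  then have "N o\<^sub>L (id_blinfun - E) = id_blinfun"
    using telescope sums_unique2 by (simp add: blinfun_compose_diff_right blinfun_pow_commute)
  with right show "is_inverse (id_blinfun - E) N" by (simp add: is_inverse_def)
  have "norm N \<le> (\<Sum>n. norm (blinfun_pow E n))" unfolding N_def by (rule summable_norm[OF norm_summable])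
  also have "\<dots> \<le> (\<Sum>n. norm E ^ n)" by (rule suminf_le[OF norm_blinfun_pow_le norm_summable geometric])
  also have "\<dots> = 1 / (1 - norm E)" using E by (simp add: suminf_geometric)
  finally show "norm N \<le> 1 / (1 - norm E)" .
  show "N - id_blinfun = E o\<^sub>L N" using right by (simp add: blinfun_compose_diff_left algebra_simps)
qed

lemma inverse_perturbation:
  fixes M S D :: "'a::banach \<Rightarrow>\<^sub>L 'a"
  assumes inv: "is_inverse M S" and small: "2 * norm S * norm D \<le> 1"
  defines "S' \<equiv> suminf (blinfun_pow (S o\<^sub>L D)) o\<^sub>L S"
  shows "is_inverse (M - D) S'" and "norm (S' - S) \<le> 2 * norm S ^ 2 * norm D"
proof -
  define E where "E = S o\<^sub>L D"
  define N where "N = suminf (blinfun_pow E)"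
  have E: "norm E \<le> norm S * norm D" unfolding E_def by (rule norm_blinfun_compose)
  with small have "norm E < 1" by simp
  note neumann = neumann_series[OF this, folded N_def]
  have SM: "S o\<^sub>L M = id_blinfun" and MS: "M o\<^sub>L S = id_blinfun"
    using inv by (auto simp: is_inverse_def)
  have factor: "M - D = M o\<^sub>L (id_blinfun - E)"
    by (simp add: E_def blinfun_compose_diff_right MS flip: blinfun_compose_assoc)
  have "S' o\<^sub>L (M - D) = N o\<^sub>L ((S o\<^sub>L M) o\<^sub>L (id_blinfun - E))"
    unfolding factor S'_def E_def N_def by (simp only: blinfun_compose_assoc)
  moreover have "(M - D) o\<^sub>L S' = M o\<^sub>L (((id_blinfun - E) o\<^sub>L N) o\<^sub>L S)"
    unfolding factor S'_def E_def N_def by (simp only: blinfun_compose_assoc)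
  ultimately show "is_inverse (M - D) S'"
    using neumann(2) SM MS by (simp add: is_inverse_def)
  have "S' - S = (N - id_blinfun) o\<^sub>L S"
    unfolding S'_def E_def N_def by (simp add: blinfun_compose_diff_left)
  also have "\<dots> = E o\<^sub>L (N o\<^sub>L S)"
    using neumann(4) by (simp add: blinfun_compose_assoc)
  finally have "norm (S' - S) = norm (E o\<^sub>L (N o\<^sub>L S))" by simp
  also have "\<dots> \<le> norm E * norm (N o\<^sub>L S)" by (rule norm_blinfun_compose)
  also have "\<dots> \<le> norm E * (norm N * norm S)" by (intro mult_left_mono norm_blinfun_compose) simp
  also have "\<dots> \<le> (norm S * norm D) * (2 * norm S)"
  proof (intro mult_mono E mult_right_mono)
    have "1 / (1 - norm E) \<le> 2" using E small by (simp add: divide_le_eq)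
    then show "norm N \<le> 2" using neumann(3) by linarith
  qed simp_all
  finally show "norm (S' - S) \<le> 2 * norm S ^ 2 * norm D"
    by (simp add: power2_eq_square algebra_simps)
qed

lemma blinfun_suminf_apply_mem:
  fixes f :: "nat \<Rightarrow> 'a::real_normed_vector \<Rightarrow>\<^sub>L 'b::banach"
  assumes "summable f" and "closed P" and "0 \<in> P" and "\<And>x y. x \<in> P \<Longrightarrow> y \<in> P \<Longrightarrow> x + y \<in> P"
    and "\<And>n. f n v \<in> P"
  shows "suminf f v \<in> P"
proof (rule closed_sequentially[OF \<open>closed P\<close>])
  have "(\<lambda>n. \<Sum>i<n. f i) \<longlonglongrightarrow> suminf f" using assms(1) by (rule summable_LIMSEQ)
  then show "(\<lambda>n. (\<Sum>i<n. f i) v) \<longlonglongrightarrow> suminf f v"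
    by (rule blinfun.tendsto[OF _ tendsto_const])
  show "(\<Sum>i<n. f i) v \<in> P" for n
    by (induction n) (simp_all add: assms(3-5) blinfun.add_left)
qed

section \<open>The complexification and its resolvent\<close>

definition cx_op :: "('a::banach \<Rightarrow>\<^sub>L 'a) \<Rightarrow> ('a \<times> 'a) \<Rightarrow>\<^sub>L ('a \<times> 'a)" where
  "cx_op B = Blinfun (\<lambda>p. (B (fst p), B (snd p)))"

definition cx_scalar :: "complex \<Rightarrow> ('a::banach \<times> 'a) \<Rightarrow>\<^sub>L ('a \<times> 'a)" where
  "cx_scalar z = Blinfun (\<lambda>p. (Re z *\<^sub>R fst p - Im z *\<^sub>R snd p, Im z *\<^sub>R fst p + Re z *\<^sub>R snd p))"

definition cx_shift :: "('a::banach \<Rightarrow>\<^sub>L 'a) \<Rightarrow> complex \<Rightarrow> ('a \<times> 'a) \<Rightarrow>\<^sub>L ('a \<times> 'a)" where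
  "cx_shift B z = cx_scalar z - cx_op B"

lemma cx_op_apply [simp]: "cx_op B (x, y) = (B x, B y)"
proof -
  have "bounded_linear (\<lambda>p. (B (fst p), B (snd p)))"
    by (intro bounded_linear_intros bounded_linear_Pair bounded_linear_fst bounded_linear_snd)
  then show ?thesis by (simp add: cx_op_def bounded_linear_Blinfun_apply)
qed

lemma cx_op_zero [simp]: "cx_op 0 = 0"
proof (rule blinfun_eqI)
  show "cx_op 0 p = blinfun_apply 0 p" for p :: "'a \<times> 'a" by (cases p) (simp add: zero_prod_def)
qed

lemma cx_scalar_apply [simp]:
  "cx_scalar z (x, y) = (Re z *\<^sub>R x - Im z *\<^sub>R y, Im z *\<^sub>R x + Re z *\<^sub>R y)"
proof -
  have "bounded_linear (\<lambda>p::'a \<times> 'a. (Re z *\<^sub>R fst p - Im z *\<^sub>R snd p, Im z *\<^sub>R fst p + Re z *\<^sub>R snd p))"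
    by (intro bounded_linear_Pair bounded_linear_sub bounded_linear_add
        bounded_linear_compose[OF bounded_linear_scaleR_right] bounded_linear_fst bounded_linear_snd)
  then show ?thesis by (simp add: cx_scalar_def bounded_linear_Blinfun_apply)
qed

lemma cx_shift_apply: "blinfun_apply (cx_shift B z) = cshift B z"
  by (auto simp: cx_shift_def cshift_def blinfun.diff_left)

lemma cx_scalar_mult: "cx_scalar a o\<^sub>L cx_scalar b = cx_scalar (a * b)"
  by (rule blinfun_eqI) (auto simp: algebra_simps scaleR_diff_right scaleR_add_right)

lemma cx_scalar_add: "cx_scalar (a + b) = cx_scalar a + cx_scalar b"
  by (rule blinfun_eqI) (auto simp: blinfun.add_left algebra_simps scaleR_add_left)

lemma cx_scalar_diff: "cx_scalar (a - b) = cx_scalar a - cx_scalar b"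
  by (rule blinfun_eqI) (auto simp: blinfun.diff_left algebra_simps scaleR_diff_left)

lemma cx_scalar_of_real: "cx_scalar (complex_of_real r) = r *\<^sub>R id_blinfun"
  by (rule blinfun_eqI) (auto simp: blinfun.scaleR_left)

lemma cx_scalar_one [simp]: "cx_scalar 1 = id_blinfun"
  using cx_scalar_of_real[of 1] by simp

lemma cx_scalar_zero [simp]: "cx_scalar 0 = 0"
  using cx_scalar_of_real[of 0] by simp

lemma cx_scalar_commute: "cx_scalar a o\<^sub>L cx_scalar b = cx_scalar b o\<^sub>L cx_scalar a"
  by (simp add: cx_scalar_mult mult.commute)

lemma cx_scalar_cx_op_commute: "cx_scalar a o\<^sub>L cx_op B = cx_op B o\<^sub>L cx_scalar a"
  by (rule blinfun_eqI) (auto simp: blinfun.bilinear_simps)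

lemma cx_scalar_cx_shift_commute: "cx_scalar a o\<^sub>L cx_shift B z = cx_shift B z o\<^sub>L cx_scalar a"
  by (simp add: cx_shift_def blinfun_compose_diff_left blinfun_compose_diff_right
      cx_scalar_cx_op_commute cx_scalar_commute)

lemma norm_cx_scalar_i_apply: "norm (cx_scalar \<i> p) = norm p"
  by (cases p) (simp add: norm_Pair add.commute)

lemma norm_cx_scalar: "norm (cx_scalar z) \<le> 2 * cmod z"
proof (rule norm_blinfun_bound)
  fix p :: "'a \<times> 'a"
  have "cx_scalar z p = Re z *\<^sub>R p + Im z *\<^sub>R cx_scalar \<i> p"
    by (cases p) (simp add: algebra_simps)
  then have "norm (cx_scalar z p) \<le> \<bar>Re z\<bar> * norm p + \<bar>Im z\<bar> * norm p"
    using norm_triangle_ineq[of "Re z *\<^sub>R p" "Im z *\<^sub>R cx_scalar \<i> p"]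
    by (simp add: norm_cx_scalar_i_apply)
  also have "\<dots> \<le> cmod z * norm p + cmod z * norm p"
    by (intro add_mono mult_right_mono abs_Re_le_cmod abs_Im_le_cmod) auto
  finally show "norm (cx_scalar z p) \<le> 2 * cmod z * norm p" by simp
qed simp

lemma bounded_linear_cx_scalar: "bounded_linear cx_scalar"
proof (rule bounded_linear_intro[where K = 2])
  show "cx_scalar (r *\<^sub>R z) = r *\<^sub>R cx_scalar z" for r z
    by (rule blinfun_eqI) (auto simp: blinfun.scaleR_left algebra_simps)
qed (use norm_cx_scalar in \<open>auto simp: cx_scalar_add mult.commute\<close>)

lemmas tendsto_cx_scalar [tendsto_intros] = bounded_linear.tendsto[OF bounded_linear_cx_scalar]

lemma in_resolvent_set_iff: "in_resolvent_set B z \<longleftrightarrow> (\<exists>S. is_inverse (cx_shift B z) S)"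
proof -
  have "(\<forall>p. S (cshift B z p) = p) \<longleftrightarrow> S o\<^sub>L cx_shift B z = id_blinfun"
    and "(\<forall>p. cshift B z (S p) = p) \<longleftrightarrow> cx_shift B z o\<^sub>L S = id_blinfun"
    for S :: "('a \<times> 'a) \<Rightarrow>\<^sub>L ('a \<times> 'a)"
    by (auto simp: cx_shift_apply fun_eq_iff simp flip: blinfun_apply_inject)
  then show ?thesis unfolding in_resolvent_set_def is_inverse_def by simp
qed

lemma resolvent_is_inverse:
  assumes "in_resolvent_set B z"
  shows "is_inverse (cx_shift B z) (resolvent B z)"
proof -
  have "(\<forall>p. resolvent B z (cshift B z p) = p) \<and> (\<forall>p. cshift B z (resolvent B z p) = p)"
    using assms unfolding resolvent_def in_resolvent_set_def by (rule someI_ex)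
  then show ?thesis by (auto simp: is_inverse_def cx_shift_apply intro: blinfun_eqI)
qed

lemma resolvent_eqI: "is_inverse (cx_shift B z) S \<Longrightarrow> resolvent B z = S"
  using resolvent_is_inverse in_resolvent_set_iff is_inverse_unique by blast

lemma resolvent_cx_scalar_commute:
  assumes "in_resolvent_set B z"
  shows "resolvent B z o\<^sub>L cx_scalar a = cx_scalar a o\<^sub>L resolvent B z"
proof -
  let ?R = "resolvent B z" and ?M = "cx_shift B z"
  have RM: "?R o\<^sub>L ?M = id_blinfun" and MR: "?M o\<^sub>L ?R = id_blinfun"
    using resolvent_is_inverse[OF assms] by (auto simp: is_inverse_def)
  have "?R o\<^sub>L cx_scalar a = ?R o\<^sub>L (cx_scalar a o\<^sub>L (?M o\<^sub>L ?R))" by (simp add: MR)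
  also have "\<dots> = (?R o\<^sub>L ?M) o\<^sub>L (cx_scalar a o\<^sub>L ?R)"
    by (simp only: cx_scalar_cx_shift_commute blinfun_compose_assoc flip: blinfun_compose_assoc[of "cx_scalar a"])
  finally show ?thesis by (simp add: RM)
qed

lemma resolvent_identity:
  assumes "in_resolvent_set B z" "in_resolvent_set B w"
  shows "resolvent B z - resolvent B w = resolvent B z o\<^sub>L cx_scalar (w - z) o\<^sub>L resolvent B w"
proof -
  let ?Rz = "resolvent B z" and ?Rw = "resolvent B w"
  have "cx_scalar (w - z) = cx_shift B w - cx_shift B z"
    by (simp add: cx_shift_def cx_scalar_diff)
  then have "?Rz o\<^sub>L cx_scalar (w - z) o\<^sub>L ?Rw
      = (?Rz o\<^sub>L (cx_shift B w o\<^sub>L ?Rw)) - ((?Rz o\<^sub>L cx_shift B z) o\<^sub>L ?Rw)"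
    by (simp add: blinfun_compose_diff_left blinfun_compose_diff_right blinfun_compose_assoc)
  then show ?thesis
    using resolvent_is_inverse[OF assms(1)] resolvent_is_inverse[OF assms(2)]
    by (simp add: is_inverse_def)
qed

lemma resolvent_perturbation:
  assumes w: "in_resolvent_set B w" and small: "4 * cmod (z - w) * norm (resolvent B w) \<le> 1"
  shows "in_resolvent_set B z"
    and "resolvent B z = suminf (blinfun_pow (resolvent B w o\<^sub>L cx_scalar (w - z))) o\<^sub>L resolvent B w"
    and "norm (resolvent B z - resolvent B w) \<le> 4 * norm (resolvent B w) ^ 2 * cmod (z - w)"
proof -
  let ?S = "resolvent B w" and ?D = "cx_scalar (w - z) :: ('a \<times> 'a) \<Rightarrow>\<^sub>L _"
  have D: "norm ?D \<le> 2 * cmod (z - w)"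
    using norm_cx_scalar[of "w - z"] by (simp add: norm_minus_commute)
  have "2 * norm ?S * norm ?D \<le> 2 * norm ?S * (2 * cmod (z - w))"
    using D by (intro mult_left_mono) auto
  with small have "2 * norm ?S * norm ?D \<le> 1" by (simp add: algebra_simps)
  note perturbed = inverse_perturbation[OF resolvent_is_inverse[OF w] this]
  have "cx_shift B z = cx_shift B w - ?D" by (simp add: cx_shift_def cx_scalar_diff)
  then have inv: "is_inverse (cx_shift B z) (suminf (blinfun_pow (?S o\<^sub>L ?D)) o\<^sub>L ?S)"
    using perturbed(1) by simp
  then show "in_resolvent_set B z" using in_resolvent_set_iff by blast
  show eq: "resolvent B z = suminf (blinfun_pow (?S o\<^sub>L ?D)) o\<^sub>L ?S" by (rule resolvent_eqI[OF inv])
  have "norm (resolvent B z - ?S) \<le> 2 * norm ?S ^ 2 * norm ?D" using perturbed(2) eq by simp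
  also have "\<dots> \<le> 2 * norm ?S ^ 2 * (2 * cmod (z - w))" using D by (intro mult_left_mono) auto
  finally show "norm (resolvent B z - ?S) \<le> 4 * norm ?S ^ 2 * cmod (z - w)" by simp
qed

lemma norm_resolvent_near_spectrum:
  assumes "in_resolvent_set B z" and "l \<in> op_spectrum B"
  shows "1 < 4 * cmod (z - l) * norm (resolvent B z)"
  using resolvent_perturbation(1)[OF assms(1), of l] assms(2)
  by (force simp: op_spectrum_def norm_minus_commute)

lemma resolvent_large:
  assumes z: "4 * norm (cx_op B) < cmod z"
  shows "in_resolvent_set B z"
    and "resolvent B z = suminf (blinfun_pow (cx_scalar (1 / z) o\<^sub>L cx_op B)) o\<^sub>L cx_scalar (1 / z)"
proof -
  let ?S = "cx_scalar (1 / z) :: ('a \<times> 'a) \<Rightarrow>\<^sub>L _"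
  have "z \<noteq> 0" using z le_less_trans[OF norm_ge_zero] by force
  then have inv: "is_inverse (cx_scalar z) ?S" by (simp add: is_inverse_def cx_scalar_mult)
  have "2 * norm ?S * norm (cx_op B) \<le> 2 * (2 * cmod (1 / z)) * norm (cx_op B)"
    by (intro mult_right_mono mult_left_mono norm_cx_scalar) auto
  also have "\<dots> \<le> 1" using z \<open>z \<noteq> 0\<close> by (simp add: norm_divide field_simps)
  finally have "is_inverse (cx_shift B z) (suminf (blinfun_pow (?S o\<^sub>L cx_op B)) o\<^sub>L ?S)"
    unfolding cx_shift_def by (rule inverse_perturbation(1)[OF inv])
  then show "in_resolvent_set B z" and "resolvent B z = suminf (blinfun_pow (?S o\<^sub>L cx_op B)) o\<^sub>L ?S"
    by (auto simp: in_resolvent_set_iff intro: resolvent_eqI)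
qed

lemma in_resolvent_set_beyond_radius:
  assumes "op_spectral_radius B < cmod z"
  shows "in_resolvent_set B z"
proof (rule ccontr)
  assume "\<not> in_resolvent_set B z"
  then have "z \<in> op_spectrum B" by (simp add: op_spectrum_def)
  moreover have "bdd_above (cmod ` op_spectrum B)"
    using resolvent_large(1) by (force simp: bdd_above_def op_spectrum_def not_less)
  ultimately have "cmod z \<le> op_spectral_radius B"
    unfolding op_spectral_radius_def by (intro cSup_upper) auto
  with assms show False by simp
qed

lemma eventually_resolvent_near:
  "\<forall>\<^sub>F z in at w. 4 * cmod (z - w) * norm (resolvent B w) < 1"
proof -
  have "((\<lambda>z. 4 * cmod (z - w) * norm (resolvent B w)) \<longlongrightarrow> 4 * cmod (w - w) * norm (resolvent B w)) (at w)"
    by (intro tendsto_intros)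
  then show ?thesis by (auto intro: order_tendstoD)
qed

lemma tendsto_resolvent:
  assumes w: "in_resolvent_set B w"
  shows "(resolvent B \<longlongrightarrow> resolvent B w) (at w)"
proof (rule LIM_zero_cancel, rule Lim_null_comparison)
  show "\<forall>\<^sub>F z in at w. norm (resolvent B z - resolvent B w) \<le> 4 * norm (resolvent B w) ^ 2 * cmod (z - w)"
    using eventually_resolvent_near[of w B]
    by (rule eventually_mono) (auto intro: resolvent_perturbation(3)[OF w])
  show "((\<lambda>z. 4 * norm (resolvent B w) ^ 2 * cmod (z - w)) \<longlongrightarrow> 0) (at w)"
    by (rule tendsto_eq_intros refl | simp)+
qed

section \<open>Weak holomorphy of the resolvent\<close>

text \<open>The complex-linear functional on the complexification with real part \<open>\<phi>\<close>.\<close>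

definition cx_functional :: "(('a::banach \<times> 'a) \<Rightarrow>\<^sub>L real) \<Rightarrow> ('a \<times> 'a) \<Rightarrow> complex" where
  "cx_functional \<phi> v = Complex (\<phi> v) (- \<phi> (cx_scalar \<i> v))"

lemma cx_functional_cx_scalar: "cx_functional \<phi> (cx_scalar c v) = c * cx_functional \<phi> v"
proof -
  have "cx_scalar c v = Re c *\<^sub>R v + Im c *\<^sub>R cx_scalar \<i> v"
    "cx_scalar \<i> (cx_scalar \<i> v) = - v"
    by (cases v; simp add: algebra_simps)+
  then show ?thesis
    unfolding cx_functional_def by (simp add: blinfun.bilinear_simps complex_eq_iff algebra_simps)
qed

lemma cx_functional_diff: "cx_functional \<phi> (u - v) = cx_functional \<phi> u - cx_functional \<phi> v"
  unfolding cx_functional_def by (simp add: blinfun.bilinear_simps complex_eq_iff)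

lemma Re_cx_functional: "Re (cx_functional \<phi> v) = \<phi> v"
  unfolding cx_functional_def by simp

lemma norm_cx_functional_le: "cmod (cx_functional \<phi> v) \<le> 2 * norm \<phi> * norm v"
proof -
  have "cmod (cx_functional \<phi> v) \<le> \<bar>\<phi> v\<bar> + \<bar>\<phi> (cx_scalar \<i> v)\<bar>"
    unfolding cx_functional_def using cmod_le[of "Complex (\<phi> v) (- \<phi> (cx_scalar \<i> v))"] by simp
  also have "\<dots> \<le> norm \<phi> * norm v + norm \<phi> * norm v"
    using norm_blinfun[of \<phi> v] norm_blinfun[of \<phi> "cx_scalar \<i> v"] norm_cx_scalar_i_apply[of v]
    by (simp only: real_norm_def)
  finally show ?thesis by (simp add: algebra_simps)
qed

lemma tendsto_cx_functional [tendsto_intros]: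
  "(f \<longlongrightarrow> v) F \<Longrightarrow> ((\<lambda>x. cx_functional \<phi> (f x)) \<longlongrightarrow> cx_functional \<phi> v) F"
  unfolding cx_functional_def by (intro tendsto_intros)

lemma resolvent_weak_derivative:
  assumes w: "in_resolvent_set B w"
  shows "((\<lambda>z. cx_functional \<phi> (resolvent B z p)) has_field_derivative
          - cx_functional \<phi> (resolvent B w (resolvent B w p))) (at w)"
proof -
  let ?R = "resolvent B"
  define q where "q = ?R w p"
  have quotient: "(cx_functional \<phi> (?R z p) - cx_functional \<phi> (?R w p)) / (z - w) = - cx_functional \<phi> (?R z q)"
    if z: "in_resolvent_set B z" "z \<noteq> w" for z
  proof -
    have "?R z - ?R w = cx_scalar (w - z) o\<^sub>L ?R z o\<^sub>L ?R w"
      by (simp add: resolvent_identity[OF z(1) w] resolvent_cx_scalar_commute[OF z(1)])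
    then have "cx_functional \<phi> (?R z p) - cx_functional \<phi> (?R w p) = (w - z) * cx_functional \<phi> (?R z q)"
      by (simp add: q_def cx_functional_cx_scalar flip: cx_functional_diff blinfun.diff_left)
    then show ?thesis using z(2) by (simp add: field_simps)
  qed
  have "\<forall>\<^sub>F z in at w. in_resolvent_set B z \<and> z \<noteq> w"
    using eventually_conj[OF eventually_resolvent_near[of w B] eventually_neq_at_within[of w w UNIV]]
    by (rule eventually_mono) (auto intro: resolvent_perturbation(1)[OF w])
  then have "\<forall>\<^sub>F z in at w. - cx_functional \<phi> (?R z q) = (cx_functional \<phi> (?R z p) - cx_functional \<phi> (?R w p)) / (z - w)"
    by (rule eventually_mono) (simp add: quotient)
  moreover have "((\<lambda>z. - cx_functional \<phi> (?R z q)) \<longlongrightarrow> - cx_functional \<phi> (?R w q)) (at w)"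
    by (intro tendsto_intros blinfun.tendsto tendsto_resolvent[OF w])
  ultimately show ?thesis
    unfolding has_field_derivative_iff q_def by (rule Lim_transform_eventually[rotated])
qed

lemma resolvent_weakly_holomorphic:
  assumes "open S" and "\<And>z. z \<in> S \<Longrightarrow> in_resolvent_set B z"
  shows "(\<lambda>z. cx_functional \<phi> (resolvent B z p)) holomorphic_on S"
  unfolding holomorphic_on_open[OF assms(1)] using assms(2) resolvent_weak_derivative by blast

section \<open>The leading Laurent coefficient at a pole\<close>

lemma deriv_bound_punctured_ball:
  fixes H :: "complex \<Rightarrow> complex"
  assumes \<epsilon>: "0 < \<epsilon>" and H: "H holomorphic_on ball l \<epsilon>"
    and bound: "\<And>z. z \<in> ball l \<epsilon> - {l} \<Longrightarrow> norm (H z) \<le> M" and w: "w \<in> ball l (\<epsilon> / 3)"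
  shows "norm (deriv H w) \<le> 2 * M / \<epsilon>"
proof -
  have sub: "cball w (\<epsilon> / 2) \<subseteq> ball l \<epsilon>"
  proof
    fix x assume "x \<in> cball w (\<epsilon> / 2)"
    then show "x \<in> ball l \<epsilon>" using w dist_triangle[of l x w] \<epsilon> by simp
  qed
  have "norm ((deriv ^^ 1) H w) \<le> fact 1 * M / (\<epsilon> / 2) ^ 1"
  proof (rule Cauchy_inequality)
    show "H holomorphic_on ball w (\<epsilon> / 2)"
      using H sub ball_subset_cball by (blast intro: holomorphic_on_subset)
    show "continuous_on (cball w (\<epsilon> / 2)) H"
      using holomorphic_on_imp_continuous_on[OF H] sub by (rule continuous_on_subset)
    fix x assume x: "norm (w - x) = \<epsilon> / 2"
    then have "x \<noteq> l" using w \<epsilon> by (auto simp: dist_norm norm_minus_commute)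
    moreover have "x \<in> ball l \<epsilon>" using x sub by (simp add: dist_norm subset_iff)
    ultimately show "norm (H x) \<le> M" using bound by simp
  qed (use \<epsilon> in simp)
  then show ?thesis by (simp add: mult.commute)
qed

lemma bounded_holomorphic_punctured_lipschitz:
  fixes h :: "complex \<Rightarrow> complex"
  assumes \<epsilon>: "0 < \<epsilon>" and holo: "h holomorphic_on ball l \<epsilon> - {l}"
    and bound: "\<And>z. z \<in> ball l \<epsilon> - {l} \<Longrightarrow> norm (h z) \<le> M"
  shows "(2 * M / \<epsilon>)-lipschitz_on (ball l (\<epsilon> / 3) - {l}) h"
proof -
  have "l + of_real (\<epsilon> / 2) \<in> ball l \<epsilon> - {l}" using \<epsilon> by (simp add: dist_norm)
  then have M: "0 \<le> M" using bound norm_ge_zero order_trans by blast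
  have "\<exists>H. H holomorphic_on ball l \<epsilon> \<and> (\<forall>z\<in>ball l \<epsilon> - {l}. H z = h z)"
  proof (subst holomorphic_on_extend_bounded)
    show "\<exists>B. \<forall>\<^sub>F z in at l. norm (h z) \<le> B"
      using \<epsilon> bound by (intro exI[of _ M]) (auto simp: eventually_at dist_commute)
  qed (use holo \<epsilon> in auto)
  then obtain H where H: "H holomorphic_on ball l \<epsilon>" and Hh: "\<And>z. z \<in> ball l \<epsilon> - {l} \<Longrightarrow> H z = h z"
    by blast
  have H_lipschitz: "norm (H z\<^sub>1 - H z\<^sub>2) \<le> (2 * M / \<epsilon>) * norm (z\<^sub>1 - z\<^sub>2)"
    if "z\<^sub>1 \<in> ball l (\<epsilon> / 3)" "z\<^sub>2 \<in> ball l (\<epsilon> / 3)" for z\<^sub>1 z\<^sub>2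
  proof (rule field_differentiable_bound[OF convex_ball _ _ that])
    show "(H has_field_derivative deriv H z) (at z within ball l (\<epsilon> / 3))"
      if "z \<in> ball l (\<epsilon> / 3)" for z
      using that \<epsilon> by (intro holomorphic_derivI[OF H open_ball]) auto
    show "norm (deriv H z) \<le> 2 * M / \<epsilon>" if "z \<in> ball l (\<epsilon> / 3)" for z
      using deriv_bound_punctured_ball[OF \<epsilon> H _ that] Hh bound by simp
  qed
  show ?thesis
  proof (intro lipschitz_onI)
    fix z\<^sub>1 z\<^sub>2 assume z: "z\<^sub>1 \<in> ball l (\<epsilon> / 3) - {l}" "z\<^sub>2 \<in> ball l (\<epsilon> / 3) - {l}"
    then have "H z\<^sub>1 = h z\<^sub>1" "H z\<^sub>2 = h z\<^sub>2" using Hh \<epsilon> by auto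
    with z show "dist (h z\<^sub>1) (h z\<^sub>2) \<le> 2 * M / \<epsilon> * dist z\<^sub>1 z\<^sub>2"
      using H_lipschitz by (metis DiffD1 dist_norm)
  qed (use M \<epsilon> in simp)
qed

definition scaled_resolvent ::
    "('a::banach \<Rightarrow>\<^sub>L 'a) \<Rightarrow> complex \<Rightarrow> nat \<Rightarrow> complex \<Rightarrow> ('a \<times> 'a) \<Rightarrow>\<^sub>L ('a \<times> 'a)" where
  "scaled_resolvent B l j z = cx_scalar ((z - l) ^ j) o\<^sub>L resolvent B z"

lemma cx_functional_scaled_resolvent:
  "cx_functional \<phi> (scaled_resolvent B l j z p) = (z - l) ^ j * cx_functional \<phi> (resolvent B z p)"
  by (simp add: scaled_resolvent_def cx_functional_cx_scalar)

lemma scaled_resolvent_lipschitz: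
  fixes B :: "'a::banach \<Rightarrow>\<^sub>L 'a"
  assumes \<epsilon>: "0 < \<epsilon>" and res: "\<And>z. z \<in> ball l \<epsilon> - {l} \<Longrightarrow> in_resolvent_set B z"
    and bound: "\<And>z. z \<in> ball l \<epsilon> - {l} \<Longrightarrow> norm (scaled_resolvent B l j z) \<le> C"
  shows "(4 * C / \<epsilon>)-lipschitz_on (ball l (\<epsilon> / 3) - {l}) (scaled_resolvent B l j)"
proof (rule lipschitz_onI)
  have "l + of_real (\<epsilon> / 2) \<in> ball l \<epsilon> - {l}" using \<epsilon> by (simp add: dist_norm)
  then have "0 \<le> C" using bound norm_ge_zero order_trans by blast
  then show C: "0 \<le> 4 * C / \<epsilon>" using \<epsilon> by simp
  fix z\<^sub>1 z\<^sub>2 assume z: "z\<^sub>1 \<in> ball l (\<epsilon> / 3) - {l}" "z\<^sub>2 \<in> ball l (\<epsilon> / 3) - {l}"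
  let ?G = "scaled_resolvent B l j"
  have "norm ((?G z\<^sub>1 - ?G z\<^sub>2) u) \<le> 4 * C / \<epsilon> * dist z\<^sub>1 z\<^sub>2 * norm u" for u :: "'a \<times> 'a"
  proof -
    let ?v = "(?G z\<^sub>1 - ?G z\<^sub>2) u"
    obtain \<phi> :: "('a \<times> 'a) \<Rightarrow>\<^sub>L real" where \<phi>: "norm \<phi> \<le> 1" "\<phi> ?v = norm ?v"
      using exists_norming_functional by blast
    define h where "h z = cx_functional \<phi> (?G z u)" for z
    have "h holomorphic_on ball l \<epsilon> - {l}"
      unfolding h_def cx_functional_scaled_resolvent
      by (intro holomorphic_intros resolvent_weakly_holomorphic) (auto intro: res)
    moreover have "norm (h z) \<le> 2 * C * norm u" if "z \<in> ball l \<epsilon> - {l}" for z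
    proof -
      have "norm (h z) \<le> 2 * norm \<phi> * norm (?G z u)" unfolding h_def by (rule norm_cx_functional_le)
      also have "\<dots> \<le> 2 * 1 * (C * norm u)"
      proof (intro mult_mono)
        show "norm (?G z u) \<le> C * norm u"
          using bound[OF that] norm_blinfun[of "?G z" u] by (meson mult_right_mono norm_ge_zero order_trans)
      qed (use \<phi>(1) in auto)
      finally show ?thesis by simp
    qed
    ultimately have "dist (h z\<^sub>1) (h z\<^sub>2) \<le> (2 * (2 * C * norm u) / \<epsilon>) * dist z\<^sub>1 z\<^sub>2"
      using z by (intro lipschitz_onD[OF bounded_holomorphic_punctured_lipschitz[OF \<epsilon>]])
    moreover have "norm ?v \<le> dist (h z\<^sub>1) (h z\<^sub>2)"
      using \<phi>(2) complex_Re_le_cmod[of "h z\<^sub>1 - h z\<^sub>2"]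
      by (simp add: h_def dist_norm Re_cx_functional blinfun.diff_left flip: cx_functional_diff)
    ultimately show ?thesis by (simp add: field_simps)
  qed
  then show "dist (?G z\<^sub>1) (?G z\<^sub>2) \<le> 4 * C / \<epsilon> * dist z\<^sub>1 z\<^sub>2"
    unfolding dist_norm using C by (intro norm_blinfun_bound) (simp_all add: dist_norm del: times_divide_eq_left)
qed

lemma scaled_resolvent_limit:
  fixes B :: "'a::banach \<Rightarrow>\<^sub>L 'a"
  assumes \<epsilon>: "0 < \<epsilon>" and res: "\<And>z. z \<in> ball l \<epsilon> - {l} \<Longrightarrow> in_resolvent_set B z"
    and bound: "\<And>z. z \<in> ball l \<epsilon> - {l} \<Longrightarrow> norm (scaled_resolvent B l j z) \<le> C"
  obtains Q where "\<And>z. z \<in> ball l (\<epsilon> / 3) - {l} \<Longrightarrow>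
    norm (scaled_resolvent B l j z - Q) \<le> 4 * C / \<epsilon> * cmod (z - l)"
proof -
  obtain g where g: "(4 * C / \<epsilon>)-lipschitz_on (closure (ball l (\<epsilon> / 3) - {l})) g"
    and eq: "\<And>z. z \<in> ball l (\<epsilon> / 3) - {l} \<Longrightarrow> g z = scaled_resolvent B l j z"
    using lipschitz_extend_closure[OF scaled_resolvent_lipschitz[OF assms]] by blast
  have "l islimpt ball l (\<epsilon> / 3) - {l}"
    using \<epsilon> by (simp add: islimpt_ball flip: islimpt_punctured)
  then have l: "l \<in> closure (ball l (\<epsilon> / 3) - {l})" by (simp add: closure_def)
  show thesis
  proof (rule that[of "g l"])
    fix z assume z: "z \<in> ball l (\<epsilon> / 3) - {l}"
    have "dist (g z) (g l) \<le> 4 * C / \<epsilon> * dist z l"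
      by (intro lipschitz_onD[OF g] closure_subset[THEN subsetD, OF z] l)
    then show "norm (scaled_resolvent B l j z - g l) \<le> 4 * C / \<epsilon> * cmod (z - l)"
      using eq[OF z] by (simp add: dist_norm)
  qed
qed

lemma resolvent_unbounded_near_spectrum:
  assumes l: "l \<in> op_spectrum B" and \<delta>: "0 < \<delta>"
    and res: "\<And>z. z \<in> ball l \<delta> - {l} \<Longrightarrow> in_resolvent_set B z"
  shows "\<not> (\<forall>z\<in>ball l \<delta> - {l}. norm (resolvent B z) \<le> C)"
proof
  assume bound: "\<forall>z\<in>ball l \<delta> - {l}. norm (resolvent B z) \<le> C"
  define t where "t = min (\<delta> / 2) (1 / (4 * (\<bar>C\<bar> + 1)))"
  have t: "0 < t" "t < \<delta>" unfolding t_def using \<delta> by (auto simp: add_pos_nonneg)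
  define z where "z = l + of_real t"
  have z: "z \<in> ball l \<delta> - {l}" "cmod (z - l) = t" using t by (auto simp: z_def dist_norm)
  have "1 < 4 * t * norm (resolvent B z)"
    using norm_resolvent_near_spectrum[OF res[OF z(1)] l] z(2) by simp
  also have "\<dots> \<le> 4 * t * \<bar>C\<bar>"
    using bound z(1) t by (intro mult_left_mono) force+
  also have "\<dots> \<le> 4 * (1 / (4 * (\<bar>C\<bar> + 1))) * \<bar>C\<bar>"
    by (intro mult_right_mono mult_left_mono) (auto simp: t_def)
  also have "\<dots> < 1" by (simp add: field_simps)
  finally have "1 < (1::real)" .
  then show False by simp
qed

lemma scaled_resolvent_pred:
  assumes "1 \<le> k" "z \<noteq> l"
  shows "scaled_resolvent B l (k - 1) z = cx_scalar (1 / (z - l)) o\<^sub>L scaled_resolvent B l k z"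
proof -
  have "1 / (z - l) * (z - l) ^ k = (z - l) ^ (k - 1)"
    using assms by (cases k) (auto simp: field_simps)
  then show ?thesis
    by (simp add: scaled_resolvent_def cx_scalar_mult flip: blinfun_compose_assoc)
qed

lemma scaled_resolvent_bounded_at_pole:
  assumes "resolvent_pole B l"
  obtains \<epsilon> m C where "0 < \<epsilon>" and "l \<in> op_spectrum B"
    and "\<And>z. z \<in> ball l \<epsilon> - {l} \<Longrightarrow> in_resolvent_set B z"
    and "\<And>z. z \<in> ball l \<epsilon> - {l} \<Longrightarrow> norm (scaled_resolvent B l m z) \<le> C"
proof -
  obtain \<epsilon> m C where \<epsilon>: "0 < \<epsilon>" and l: "l \<in> op_spectrum B"
    and spec: "op_spectrum B \<inter> ball l \<epsilon> = {l}"
    and pole: "\<And>z. z \<in> ball l \<epsilon> - {l} \<Longrightarrow> cmod (z - l) ^ m * norm (resolvent B z) \<le> C"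
    using assms unfolding resolvent_pole_def by blast
  have "norm (scaled_resolvent B l m z) \<le> 2 * C" if "z \<in> ball l \<epsilon> - {l}" for z
  proof -
    have "norm (scaled_resolvent B l m z) \<le> 2 * cmod ((z - l) ^ m) * norm (resolvent B z)"
      unfolding scaled_resolvent_def
      by (rule order_trans[OF norm_blinfun_compose mult_right_mono[OF norm_cx_scalar]]) simp
    then show ?thesis using pole[OF that] by (simp add: norm_power)
  qed
  moreover have "\<And>z. z \<in> ball l \<epsilon> - {l} \<Longrightarrow> in_resolvent_set B z"
    using spec unfolding op_spectrum_def by blast
  ultimately show thesis using that \<epsilon> l by blast
qed

lemma scaled_resolvent_pred_bounded:
  assumes k: "1 \<le> k" and z: "z \<noteq> l" and bound: "norm (scaled_resolvent B l k z) \<le> L * cmod (z - l)"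
  shows "norm (scaled_resolvent B l (k - 1) z) \<le> 2 * L"
proof -
  have "norm (scaled_resolvent B l (k - 1) z) \<le> 2 * cmod (1 / (z - l)) * (L * cmod (z - l))"
    unfolding scaled_resolvent_pred[OF k z]
    using bound by (intro order_trans[OF norm_blinfun_compose] mult_mono norm_cx_scalar) auto
  then show ?thesis using z by (simp add: norm_divide)
qed

lemma tendsto_at_from_rate:
  fixes f :: "complex \<Rightarrow> 'b::real_normed_vector"
  assumes "0 < \<delta>" and "\<And>z. z \<in> ball l \<delta> - {l} \<Longrightarrow> norm (f z - Q) \<le> L * cmod (z - l)"
  shows "(f \<longlongrightarrow> Q) (at l)"
proof (rule LIM_zero_cancel, rule Lim_null_comparison)
  show "\<forall>\<^sub>F z in at l. norm (f z - Q) \<le> L * cmod (z - l)"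
    using assms by (auto simp: eventually_at dist_commute intro!: exI[of _ \<delta>])
  show "((\<lambda>z. L * cmod (z - l)) \<longlongrightarrow> 0) (at l)"
    by (rule tendsto_eq_intros refl | simp)+
qed

lemma pole_leading_coefficient:
  fixes B :: "'a::banach \<Rightarrow>\<^sub>L 'a"
  assumes "resolvent_pole B l"
  obtains k Q where "1 \<le> k" and "Q \<noteq> 0" and "\<forall>\<^sub>F z in at l. in_resolvent_set B z"
    and "(scaled_resolvent B l k \<longlongrightarrow> Q) (at l)"
proof -
  obtain \<epsilon> m C\<^sub>0 where \<epsilon>: "0 < \<epsilon>" and l: "l \<in> op_spectrum B"
    and res: "\<And>z. z \<in> ball l \<epsilon> - {l} \<Longrightarrow> in_resolvent_set B z"
    and bound\<^sub>m: "\<And>z. z \<in> ball l \<epsilon> - {l} \<Longrightarrow> norm (scaled_resolvent B l m z) \<le> C\<^sub>0"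
    using scaled_resolvent_bounded_at_pole[OF assms] by blast
  define bounded_order where "bounded_order j \<longleftrightarrow>
    (\<exists>\<delta> C. 0 < \<delta> \<and> \<delta> \<le> \<epsilon> \<and> (\<forall>z\<in>ball l \<delta> - {l}. norm (scaled_resolvent B l j z) \<le> C))" for j
  have "bounded_order m" unfolding bounded_order_def using \<epsilon> bound\<^sub>m by blast
  define k where "k = (LEAST j. bounded_order j)"
  have "bounded_order k" unfolding k_def by (rule LeastI[of bounded_order m]) fact
  then obtain \<delta> C where \<delta>: "0 < \<delta>" "\<delta> \<le> \<epsilon>"
    and bound: "\<And>z. z \<in> ball l \<delta> - {l} \<Longrightarrow> norm (scaled_resolvent B l k z) \<le> C"
    unfolding bounded_order_def by blast
  have res\<delta>: "\<And>z. z \<in> ball l \<delta> - {l} \<Longrightarrow> in_resolvent_set B z" using res \<delta> by auto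
  have "k \<noteq> 0"
  proof
    assume "k = 0"
    then have "\<forall>z\<in>ball l \<delta> - {l}. norm (resolvent B z) \<le> C"
      using bound by (simp add: scaled_resolvent_def)
    with resolvent_unbounded_near_spectrum[OF l \<delta>(1) res\<delta>] show False by blast
  qed
  then have k: "1 \<le> k" by simp
  obtain Q where Q: "\<And>z. z \<in> ball l (\<delta> / 3) - {l} \<Longrightarrow>
      norm (scaled_resolvent B l k z - Q) \<le> 4 * C / \<delta> * cmod (z - l)"
    using scaled_resolvent_limit[OF \<delta>(1) res\<delta> bound] by blast
  have "Q \<noteq> 0"
  proof
    assume "Q = 0"
    have pred: "\<forall>z\<in>ball l (\<delta> / 3) - {l}. norm (scaled_resolvent B l (k - 1) z) \<le> 2 * (4 * C / \<delta>)"
    proof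
      fix z assume z: "z \<in> ball l (\<delta> / 3) - {l}"
      then have "norm (scaled_resolvent B l k z) \<le> 4 * C / \<delta> * cmod (z - l)"
        using Q[OF z] \<open>Q = 0\<close> by simp
      then show "norm (scaled_resolvent B l (k - 1) z) \<le> 2 * (4 * C / \<delta>)"
        using z by (intro scaled_resolvent_pred_bounded[OF k]) auto
    qed
    have "bounded_order (k - 1)"
      unfolding bounded_order_def
      by (rule exI[of _ "\<delta> / 3"], rule exI[of _ "2 * (4 * C / \<delta>)"]) (use \<delta> pred in auto)
    then show False using not_less_Least[of "k - 1" bounded_order] k by (simp add: k_def)
  qed
  moreover have "\<forall>\<^sub>F z in at l. in_resolvent_set B z"
    using \<delta>(1) res\<delta> by (auto simp: eventually_at dist_commute intro!: exI[of _ \<delta>])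
  moreover have "(scaled_resolvent B l k \<longlongrightarrow> Q) (at l)"
    using \<delta>(1) Q by (intro tendsto_at_from_rate[of "\<delta> / 3" l _ Q "4 * C / \<delta>"]) auto
  ultimately show thesis using that[OF k] by blast
qed

lemma scaled_resolvent_identities:
  assumes z: "in_resolvent_set B z"
  shows "cx_shift B z o\<^sub>L scaled_resolvent B l k z = cx_scalar ((z - l) ^ k)"
    and "scaled_resolvent B l k z o\<^sub>L cx_shift B z = cx_scalar ((z - l) ^ k)"
    and "cx_scalar a o\<^sub>L scaled_resolvent B l k z = scaled_resolvent B l k z o\<^sub>L cx_scalar a"
proof -
  have RM: "resolvent B z o\<^sub>L cx_shift B z = id_blinfun" and MR: "cx_shift B z o\<^sub>L resolvent B z = id_blinfun"
    using resolvent_is_inverse[OF z] by (auto simp: is_inverse_def)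
  have "cx_shift B z o\<^sub>L (cx_scalar ((z - l) ^ k) o\<^sub>L resolvent B z)
      = cx_scalar ((z - l) ^ k) o\<^sub>L (cx_shift B z o\<^sub>L resolvent B z)"
    by (simp only: cx_scalar_cx_shift_commute flip: blinfun_compose_assoc)
  then show "cx_shift B z o\<^sub>L scaled_resolvent B l k z = cx_scalar ((z - l) ^ k)"
    by (simp add: scaled_resolvent_def MR)
  show "scaled_resolvent B l k z o\<^sub>L cx_shift B z = cx_scalar ((z - l) ^ k)"
    unfolding scaled_resolvent_def by (simp add: RM blinfun_compose_assoc)
  show "cx_scalar a o\<^sub>L scaled_resolvent B l k z = scaled_resolvent B l k z o\<^sub>L cx_scalar a"
    unfolding scaled_resolvent_def
    by (simp only: blinfun_compose_assoc resolvent_cx_scalar_commute[OF z])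
       (simp only: cx_scalar_commute flip: blinfun_compose_assoc)
qed

lemma tendsto_unique_eventually_eq:
  fixes a b :: "'b::t2_space"
  assumes "F \<noteq> bot" and "(f \<longlongrightarrow> a) F" and "(g \<longlongrightarrow> b) F" and "\<forall>\<^sub>F x in F. f x = g x"
  shows "a = b"
  using tendsto_unique[OF assms(1) Lim_transform_eventually[OF assms(2,4)] assms(3)] .

lemma leading_coefficient_eigen:
  assumes k: "1 \<le> k" and res: "\<forall>\<^sub>F z in at l. in_resolvent_set B z"
    and lim: "(scaled_resolvent B l k \<longlongrightarrow> Q) (at l)"
  shows "(cx_op B - cx_scalar l) o\<^sub>L Q = 0" and "Q o\<^sub>L (cx_op B - cx_scalar l) = 0"
proof -
  let ?G = "scaled_resolvent B l k" and ?X = "cx_op B - cx_scalar l"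
  have X: "?X = cx_scalar (z - l) - cx_shift B z" for z
    by (simp add: cx_shift_def cx_scalar_diff)
  have vanish: "((\<lambda>z. cx_scalar ((z - l) ^ k)) \<longlongrightarrow> 0) (at l)"
    using k by (intro tendsto_eq_intros) (auto simp: power_0_left)
  have "((\<lambda>z. (cx_scalar (z - l) o\<^sub>L ?G z) - cx_scalar ((z - l) ^ k)) \<longlongrightarrow> (cx_scalar (l - l) o\<^sub>L Q) - 0) (at l)"
    by (intro tendsto_intros lim vanish)
  moreover have "((\<lambda>z. ?X o\<^sub>L ?G z) \<longlongrightarrow> ?X o\<^sub>L Q) (at l)"
    by (intro tendsto_intros lim)
  moreover have "\<forall>\<^sub>F z in at l. (cx_scalar (z - l) o\<^sub>L ?G z) - cx_scalar ((z - l) ^ k) = ?X o\<^sub>L ?G z"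
  proof (rule eventually_mono[OF res])
    fix z assume "in_resolvent_set B z"
    then show "(cx_scalar (z - l) o\<^sub>L ?G z) - cx_scalar ((z - l) ^ k) = ?X o\<^sub>L ?G z"
      unfolding X[of z] by (simp add: blinfun_compose_diff_left scaled_resolvent_identities(1))
  qed
  ultimately show "?X o\<^sub>L Q = 0"
    using tendsto_unique_eventually_eq[OF at_neq_bot] by fastforce
  have "((\<lambda>z. (?G z o\<^sub>L cx_scalar (z - l)) - cx_scalar ((z - l) ^ k)) \<longlongrightarrow> (Q o\<^sub>L cx_scalar (l - l)) - 0) (at l)"
    by (intro tendsto_intros lim vanish)
  moreover have "((\<lambda>z. ?G z o\<^sub>L ?X) \<longlongrightarrow> Q o\<^sub>L ?X) (at l)"
    by (intro tendsto_intros lim)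
  moreover have "\<forall>\<^sub>F z in at l. (?G z o\<^sub>L cx_scalar (z - l)) - cx_scalar ((z - l) ^ k) = ?G z o\<^sub>L ?X"
  proof (rule eventually_mono[OF res])
    fix z assume "in_resolvent_set B z"
    then show "(?G z o\<^sub>L cx_scalar (z - l)) - cx_scalar ((z - l) ^ k) = ?G z o\<^sub>L ?X"
      unfolding X[of z] by (simp add: blinfun_compose_diff_right scaled_resolvent_identities(2))
  qed
  ultimately show "Q o\<^sub>L ?X = 0"
    using tendsto_unique_eventually_eq[OF at_neq_bot] by fastforce
qed

lemma leading_coefficient_cx_scalar_commute:
  assumes res: "\<forall>\<^sub>F z in at l. in_resolvent_set B z"
    and lim: "(scaled_resolvent B l k \<longlongrightarrow> Q) (at l)"
  shows "cx_scalar a o\<^sub>L Q = Q o\<^sub>L cx_scalar a"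
proof -
  have "((\<lambda>z. cx_scalar a o\<^sub>L scaled_resolvent B l k z) \<longlongrightarrow> cx_scalar a o\<^sub>L Q) (at l)"
    and "((\<lambda>z. scaled_resolvent B l k z o\<^sub>L cx_scalar a) \<longlongrightarrow> Q o\<^sub>L cx_scalar a) (at l)"
    by (intro tendsto_intros lim)+
  moreover have "\<forall>\<^sub>F z in at l. cx_scalar a o\<^sub>L scaled_resolvent B l k z = scaled_resolvent B l k z o\<^sub>L cx_scalar a"
    using res by (rule eventually_mono) (rule scaled_resolvent_identities(3))
  ultimately show ?thesis by (rule tendsto_unique_eventually_eq[OF at_neq_bot])
qed

section \<open>Positivity of the resolvent\<close>

definition cx_positive :: "'a::banach set \<Rightarrow> (('a \<times> 'a) \<Rightarrow>\<^sub>L ('a \<times> 'a)) \<Rightarrow> bool" where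
  "cx_positive K S \<longleftrightarrow> (\<forall>x\<in>K. S (x, 0) \<in> K \<times> {0})"

lemma cx_positive_id: "cx_positive K id_blinfun"
  by (simp add: cx_positive_def)

lemma cx_positive_compose: "cx_positive K S \<Longrightarrow> cx_positive K T \<Longrightarrow> cx_positive K (S o\<^sub>L T)"
  unfolding cx_positive_def by force

lemma cx_positive_cx_op: "positive_op K B \<Longrightarrow> cx_positive K (cx_op B)"
  by (simp add: cx_positive_def positive_op_def)

lemma cx_positive_cx_scalar_of_real:
  "closed_wedge K \<Longrightarrow> 0 \<le> c \<Longrightarrow> cx_positive K (cx_scalar (complex_of_real c))"
  by (simp add: cx_positive_def closed_wedge_def)

lemma cx_positive_neumann_series:
  assumes K: "closed_wedge K" and E: "cx_positive K E" and summable: "summable (blinfun_pow E)"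
  shows "cx_positive K (suminf (blinfun_pow E))"
  unfolding cx_positive_def
proof
  fix x assume x: "x \<in> K"
  have "cx_positive K (blinfun_pow E n)" for n
    by (induction n) (simp_all add: cx_positive_id cx_positive_compose E)
  then show "suminf (blinfun_pow E) (x, 0) \<in> K \<times> {0}"
    using K x by (intro blinfun_suminf_apply_mem[OF summable] closed_Times)
      (auto simp: closed_wedge_def cx_positive_def zero_prod_def)
qed

lemma resolvent_positive_large:
  assumes K: "closed_wedge K" and B: "positive_op K B" and t: "4 * norm (cx_op B) < t"
  shows "cx_positive K (resolvent B (complex_of_real t))"
proof -
  let ?S = "cx_scalar (complex_of_real (1 / t)) :: ('a \<times> 'a) \<Rightarrow>\<^sub>L _"
  have t': "4 * norm (cx_op B) < cmod (complex_of_real t)" "0 < t"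
    using t le_less_trans[OF mult_nonneg_nonneg[of 4 "norm (cx_op B)"]] by auto
  have S: "cx_positive K ?S" using t' by (intro cx_positive_cx_scalar_of_real K) simp
  have "norm (?S o\<^sub>L cx_op B) \<le> 2 * (1 / t) * norm (cx_op B)"
    using norm_cx_scalar[of "complex_of_real (1 / t)"] t'
    by (intro order_trans[OF norm_blinfun_compose] mult_right_mono) (auto simp: norm_divide)
  also have "\<dots> < 1" using t t' by (simp add: field_simps)
  finally have "summable (blinfun_pow (?S o\<^sub>L cx_op B))" by (rule neumann_series(1))
  then show ?thesis
    unfolding resolvent_large(2)[OF t'(1)] using S
    by (intro cx_positive_compose cx_positive_neumann_series K cx_positive_cx_op B) (simp_all add: of_real_divide)
qed

lemma resolvent_positive_step_down:
  assumes K: "closed_wedge K" and t: "in_resolvent_set B (complex_of_real t)"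
    and pos: "cx_positive K (resolvent B (complex_of_real t))"
    and st: "s \<le> t" and small: "4 * (t - s) * norm (resolvent B (complex_of_real t)) \<le> 1"
  shows "cx_positive K (resolvent B (complex_of_real s))"
proof -
  let ?R = "resolvent B (complex_of_real t)"
  let ?E = "?R o\<^sub>L cx_scalar (complex_of_real (t - s))"
  have dist: "cmod (complex_of_real s - complex_of_real t) = t - s"
    using st by (simp flip: of_real_diff)
  have "norm ?E \<le> norm ?R * (2 * (t - s))"
    using norm_cx_scalar[of "complex_of_real (t - s)"] st
    by (intro order_trans[OF norm_blinfun_compose] mult_left_mono) (auto simp del: of_real_diff)
  also have "\<dots> < 1" using small by (simp add: algebra_simps)
  finally have summable: "summable (blinfun_pow ?E)" by (rule neumann_series(1))
  have E: "cx_positive K ?E"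
    using st by (intro cx_positive_compose pos cx_positive_cx_scalar_of_real K) simp
  have "resolvent B (complex_of_real s) = suminf (blinfun_pow ?E) o\<^sub>L ?R"
    using resolvent_perturbation(2)[OF t, of "complex_of_real s", unfolded dist, OF small]
    by (simp flip: of_real_diff)
  then show ?thesis
    using cx_positive_neumann_series[OF K E summable] pos by (simp add: cx_positive_compose)
qed

lemma resolvent_positive_locally:
  assumes K: "closed_wedge K" and s: "in_resolvent_set B (complex_of_real s)"
  obtains \<eta> where "0 < \<eta>"
    and "\<And>t u. \<bar>t - s\<bar> < \<eta> \<Longrightarrow> u \<le> t \<Longrightarrow> t - u < \<eta> \<Longrightarrow>
           cx_positive K (resolvent B (complex_of_real t)) \<Longrightarrow> cx_positive K (resolvent B (complex_of_real u))"
proof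
  define \<rho> where "\<rho> = norm (resolvent B (complex_of_real s))"
  define \<eta> where "\<eta> = 1 / (8 * (\<rho> + 1))"
  have \<rho>: "0 \<le> \<rho>" by (simp add: \<rho>_def)
  then show \<eta>: "0 < \<eta>" by (simp add: \<eta>_def add_pos_nonneg)
  fix t u
  assume ts: "\<bar>t - s\<bar> < \<eta>" and ut: "u \<le> t" "t - u < \<eta>"
    and pos: "cx_positive K (resolvent B (complex_of_real t))"
  have dist: "cmod (complex_of_real t - complex_of_real s) = \<bar>t - s\<bar>"
    by (simp flip: of_real_diff)
  have "4 * \<bar>t - s\<bar> * \<rho> \<le> 4 * \<eta> * \<rho>" using ts \<rho> by (intro mult_right_mono) auto
  also have "\<dots> \<le> 1" using \<rho> by (simp add: \<eta>_def field_simps)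
  finally have near: "4 * cmod (complex_of_real t - complex_of_real s) * \<rho> \<le> 1" by (simp add: dist)
  note perturbed = resolvent_perturbation[OF s near[unfolded \<rho>_def]]
  have "norm (resolvent B (complex_of_real t)) \<le> \<rho> + 4 * \<rho> ^ 2 * \<bar>t - s\<bar>"
    using perturbed(3) norm_triangle_ineq2[of "resolvent B (complex_of_real t)" "resolvent B (complex_of_real s)"]
    by (simp add: \<rho>_def dist)
  also have "\<dots> \<le> \<rho> + 4 * \<rho> ^ 2 * \<eta>" using ts \<rho> by (intro add_left_mono mult_left_mono) auto
  also have "\<dots> \<le> 2 * \<rho> + 1" using \<rho> by (simp add: \<eta>_def field_simps power2_eq_square)
  finally have bound: "norm (resolvent B (complex_of_real t)) \<le> 2 * \<rho> + 1" .
  have "4 * (t - u) * norm (resolvent B (complex_of_real t)) \<le> 4 * \<eta> * (2 * \<rho> + 1)"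
    using ut bound by (intro mult_mono) auto
  also have "\<dots> \<le> 1" using \<rho> by (simp add: \<eta>_def field_simps)
  finally show "cx_positive K (resolvent B (complex_of_real u))"
    by (intro resolvent_positive_step_down[OF K perturbed(1) pos ut(1)])
qed

lemma resolvent_positive:
  assumes K: "closed_wedge K" and B: "positive_op K B" and t\<^sub>0: "op_spectral_radius B < t\<^sub>0"
  shows "cx_positive K (resolvent B (complex_of_real t\<^sub>0))"
proof (rule ccontr)
  let ?R = "\<lambda>t. resolvent B (complex_of_real t)"
  define bad where "bad = {t. t\<^sub>0 \<le> t \<and> \<not> cx_positive K (?R t)}"
  assume "\<not> cx_positive K (?R t\<^sub>0)"
  then have t\<^sub>0_bad: "t\<^sub>0 \<in> bad" by (simp add: bad_def)
  have upper: "t \<le> 4 * norm (cx_op B)" if "t \<in> bad" for t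
  proof (rule ccontr)
    assume "\<not> t \<le> 4 * norm (cx_op B)"
    then show False using that resolvent_positive_large[OF K B, of t] by (simp add: bad_def)
  qed
  define s where "s = Sup bad"
  have le_s: "t \<le> s" if "t \<in> bad" for t
    unfolding s_def using that upper by (intro cSup_upper) (auto simp: bdd_above_def)
  have "op_spectral_radius B < cmod (complex_of_real s)"
    using le_s[OF t\<^sub>0_bad] t\<^sub>0 by simp
  then obtain \<eta> where \<eta>: "0 < \<eta>" and stable: "\<And>t u. \<bar>t - s\<bar> < \<eta> \<Longrightarrow> u \<le> t \<Longrightarrow> t - u < \<eta> \<Longrightarrow>
      cx_positive K (?R t) \<Longrightarrow> cx_positive K (?R u)"
    using resolvent_positive_locally[OF K in_resolvent_set_beyond_radius] by blast
  have "s - \<eta> / 2 < Sup bad" using \<eta> by (simp add: s_def)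
  then obtain u where u: "u \<in> bad" "s - \<eta> / 2 < u"
    using less_cSupE[of "s - \<eta> / 2" bad] t\<^sub>0_bad by blast
  have "s + \<eta> / 2 \<notin> bad"
  proof
    assume "s + \<eta> / 2 \<in> bad"
    with le_s \<eta> show False by force
  qed
  moreover have "t\<^sub>0 \<le> s + \<eta> / 2" using le_s[OF t\<^sub>0_bad] \<eta> by simp
  ultimately have "cx_positive K (?R (s + \<eta> / 2))" by (simp add: bad_def)
  moreover have "\<bar>(s + \<eta> / 2) - s\<bar> < \<eta>" "u \<le> s + \<eta> / 2" "(s + \<eta> / 2) - u < \<eta>"
    using u le_s[OF u(1)] \<eta> by auto
  ultimately have "cx_positive K (?R u)" using stable by blast
  with u(1) show False by (simp add: bad_def)
qed

lemma leading_coefficient_positive: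
  assumes K: "closed_wedge K" and B: "positive_op K B"
    and lim: "(scaled_resolvent B (complex_of_real (op_spectral_radius B)) k \<longlongrightarrow> Q)
                (at (complex_of_real (op_spectral_radius B)))"
  shows "cx_positive K Q"
  unfolding cx_positive_def
proof
  fix x assume x: "x \<in> K"
  define r where "r = op_spectral_radius B"
  let ?G = "\<lambda>t. scaled_resolvent B (complex_of_real r) k (complex_of_real (r + t))"
  have "filterlim (\<lambda>t. complex_of_real (r + t)) (at (complex_of_real r)) (at_right 0)"
    unfolding filterlim_at
    by (auto intro!: tendsto_eq_intros eventually_mono[OF eventually_at_right_less])
  then have "(?G \<longlongrightarrow> Q) (at_right 0)"
    using filterlim_compose lim unfolding r_def by blast
  then have "((\<lambda>t. ?G t (x, 0)) \<longlongrightarrow> Q (x, 0)) (at_right 0)"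
    by (intro tendsto_intros)
  moreover have "\<forall>\<^sub>F t in at_right 0. ?G t (x, 0) \<in> K \<times> {0}"
  proof (rule eventually_mono[OF eventually_at_right_less])
    fix t :: real assume t: "0 < t"
    have "(complex_of_real (r + t) - complex_of_real r) ^ k = complex_of_real (t ^ k)" by simp
    moreover have "cx_positive K (cx_scalar (complex_of_real (t ^ k)))"
      using t by (intro cx_positive_cx_scalar_of_real[OF K]) simp
    moreover have "cx_positive K (resolvent B (complex_of_real (r + t)))"
      using t by (intro resolvent_positive[OF K B]) (simp add: r_def)
    ultimately have "cx_positive K (?G t)"
      unfolding scaled_resolvent_def by (simp add: cx_positive_compose)
    then show "?G t (x, 0) \<in> K \<times> {0}" using x by (simp add: cx_positive_def)
  qed
  moreover have "closed (K \<times> {0::'a})" using K by (intro closed_Times) (auto simp: closed_wedge_def)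
  ultimately show "Q (x, 0) \<in> K \<times> {0}"
    using Lim_in_closed_set by (metis trivial_limit_at_right_real)
qed

definition cx_realpart :: "(('a::banach \<times> 'a) \<Rightarrow>\<^sub>L ('a \<times> 'a)) \<Rightarrow> 'a \<Rightarrow>\<^sub>L 'a" where
  "cx_realpart S = Blinfun (\<lambda>x. fst (S (x, 0)))"

lemma cx_realpart_apply: "cx_realpart S x = fst (S (x, 0))"
proof -
  have "bounded_linear (\<lambda>x::'a. fst (S (x, 0)))"
    by (intro bounded_linear_compose[OF bounded_linear_fst] bounded_linear_intros
        bounded_linear_Pair bounded_linear_ident bounded_linear_zero)
  then show ?thesis by (simp add: cx_realpart_def bounded_linear_Blinfun_apply)
qed

lemma cx_positive_real_apply:
  assumes S: "cx_positive K S" and gen: "generating_cone K"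
  shows "S (x, 0) = (cx_realpart S x, 0)"
proof -
  obtain u v where uv: "u \<in> K" "v \<in> K" "x = u - v"
    using gen unfolding generating_cone_def by blast
  then have "S (x, 0) = S (u, 0) - S (v, 0)"
    by (simp flip: blinfun.diff_right)
  moreover have "snd (S (u, 0)) = 0" "snd (S (v, 0)) = 0"
    using S uv unfolding cx_positive_def by (auto simp: mem_Times_iff)
  ultimately show ?thesis by (simp add: prod_eq_iff cx_realpart_apply)
qed

lemma cx_positive_complexification:
  assumes S: "cx_positive K S" and gen: "generating_cone K"
    and i: "cx_scalar \<i> o\<^sub>L S = S o\<^sub>L cx_scalar \<i>"
  shows "S = cx_op (cx_realpart S)"
proof (rule blinfun_eqI)
  fix p :: "'a \<times> 'a"
  obtain x y where xy: "p = (x, y)" by fastforce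
  have commute: "cx_scalar \<i> (S (y, 0)) = S (cx_scalar \<i> (y, 0))"
    using arg_cong[OF i, of "\<lambda>T. T (y, 0)"] by (simp only: blinfun_apply_blinfun_compose)
  have "S p = S (x, 0) + S (cx_scalar \<i> (y, 0))"
    using xy by (simp flip: blinfun.add_right)
  also have "\<dots> = S (x, 0) + cx_scalar \<i> (S (y, 0))" by (simp only: commute)
  finally show "S p = cx_op (cx_realpart S) p"
    using xy by (simp add: cx_positive_real_apply[OF S gen])
qed

section \<open>Positive eigen-operators at the spectral radius\<close>

lemma positive_eigenoperator_at_pole:
  fixes B :: "'a::banach \<Rightarrow>\<^sub>L 'a"
  assumes K: "closed_wedge K" and gen: "generating_cone K" and B: "positive_op K B"
    and pole: "resolvent_pole B (complex_of_real (op_spectral_radius B))"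
  obtains P where "P \<noteq> 0" and "positive_op K P"
    and "B o\<^sub>L P = op_spectral_radius B *\<^sub>R P" and "P o\<^sub>L B = op_spectral_radius B *\<^sub>R P"
proof -
  define r where "r = op_spectral_radius B"
  obtain k Q where k: "1 \<le> k" and "Q \<noteq> 0"
    and res: "\<forall>\<^sub>F z in at (complex_of_real r). in_resolvent_set B z"
    and lim: "(scaled_resolvent B (complex_of_real r) k \<longlongrightarrow> Q) (at (complex_of_real r))"
    using pole_leading_coefficient[OF pole] unfolding r_def by blast
  note eigen = leading_coefficient_eigen[OF k res lim]
  have Q: "cx_positive K Q" using leading_coefficient_positive[OF K B lim[unfolded r_def]] .
  define P where "P = cx_realpart Q"
  have QP: "Q = cx_op P"
    unfolding P_def using leading_coefficient_cx_scalar_commute[OF res lim]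
    by (rule cx_positive_complexification[OF Q gen])
  show thesis
  proof
    show "P \<noteq> 0" using \<open>Q \<noteq> 0\<close> QP by (auto intro: blinfun_eqI)
    show "positive_op K P" using Q by (simp add: QP cx_positive_def positive_op_def)
    show "B o\<^sub>L P = op_spectral_radius B *\<^sub>R P"
      unfolding r_def[symmetric]
    proof (rule blinfun_eqI)
      fix x
      have "((cx_op B - cx_scalar (complex_of_real r)) o\<^sub>L Q) (x, 0) = 0" using eigen(1) by simp
      then show "(B o\<^sub>L P) x = (r *\<^sub>R P) x"
        by (simp add: QP blinfun.diff_left blinfun.scaleR_left zero_prod_def)
    qed
    show "P o\<^sub>L B = op_spectral_radius B *\<^sub>R P"
      unfolding r_def[symmetric]
    proof (rule blinfun_eqI)
      fix x
      have "(Q o\<^sub>L (cx_op B - cx_scalar (complex_of_real r))) (x, 0) = 0" using eigen(2) by simp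
      then show "(P o\<^sub>L B) x = (r *\<^sub>R P) x"
        by (simp add: QP blinfun.diff_left blinfun.diff_right blinfun.scaleR_left blinfun.scaleR_right zero_prod_def)
    qed
  qed
qed

lemma op_inverse_eqI:
  assumes "is_inverse M S"
  shows "op_inverse M = S"
proof -
  have "is_inverse M (op_inverse M)"
    using someI[of "\<lambda>S. S o\<^sub>L M = id_blinfun \<and> M o\<^sub>L S = id_blinfun" S] assms
    unfolding op_inverse_def is_inverse_def by blast
  then show ?thesis using assms by (rule is_inverse_unique)
qed

lemma op_inverse_id_minus_positive:
  fixes T :: "'a::banach \<Rightarrow>\<^sub>L 'a"
  assumes K: "closed_wedge K" and gen: "generating_cone K" and T: "positive_op K T"
    and rT: "op_spectral_radius T < 1"
  shows "is_inverse (id_blinfun - T) (op_inverse (id_blinfun - T))"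
    and "positive_op K (op_inverse (id_blinfun - T))"
proof -
  let ?R = "resolvent T 1"
  have "is_inverse (cx_shift T 1) ?R"
    using rT by (intro resolvent_is_inverse in_resolvent_set_beyond_radius) simp
  then have RM: "?R o\<^sub>L cx_shift T 1 = id_blinfun" and MR: "cx_shift T 1 o\<^sub>L ?R = id_blinfun"
    by (auto simp: is_inverse_def)
  have R: "cx_positive K ?R" using resolvent_positive[OF K T rT] by simp
  define W where "W = cx_realpart ?R"
  have RW: "?R (x, 0) = (W x, 0)" for x
    unfolding W_def by (rule cx_positive_real_apply[OF R gen])
  have M: "cx_shift T 1 (x, 0) = (x - T x, 0)" for x
    by (simp add: cx_shift_apply cshift_def)
  have "is_inverse (id_blinfun - T) W"
    unfolding is_inverse_def
  proof (intro conjI blinfun_eqI)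
    fix x
    have "(?R o\<^sub>L cx_shift T 1) (x, 0) = (x, 0)" using RM by simp
    then show "(W o\<^sub>L (id_blinfun - T)) x = id_blinfun x" by (simp add: M RW blinfun.diff_left)
    have "(cx_shift T 1 o\<^sub>L ?R) (x, 0) = (x, 0)" using MR by simp
    then show "((id_blinfun - T) o\<^sub>L W) x = id_blinfun x" by (simp add: M RW blinfun.diff_left)
  qed
  moreover have "positive_op K W"
    using R by (simp add: cx_positive_def positive_op_def RW)
  ultimately show "is_inverse (id_blinfun - T) (op_inverse (id_blinfun - T))"
    and "positive_op K (op_inverse (id_blinfun - T))"
    by (simp_all add: op_inverse_eqI)
qed

section \<open>The comparison of the two spectral radii\<close>

lemma closed_wedge_if_generating_cone:
  assumes cone: "is_cone K" and gen: "generating_cone K"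
  shows "closed_wedge K"
proof -
  have scale: "\<And>x c. x \<in> K \<Longrightarrow> 0 \<le> c \<Longrightarrow> c *\<^sub>R x \<in> K" and "convex K" "closed K"
    using cone by (auto simp: is_cone_def)
  obtain u where "u \<in> K" using gen by (auto simp: generating_cone_def)
  then have zero: "0 \<in> K" using scale[of u 0] by simp
  have "x + y \<in> K" if "x \<in> K" "y \<in> K" for x y
    using scale[OF convexD[OF \<open>convex K\<close> that, of "1 / 2" "1 / 2"], of 2] by (simp add: scaleR_add_right)
  then show ?thesis using zero scale \<open>closed K\<close> by (simp add: closed_wedge_def)
qed

lemma blinfun_eq_zero_on_generating_cone:
  fixes P :: "'a::real_normed_vector \<Rightarrow>\<^sub>L 'b::real_normed_vector"
  assumes "generating_cone K" and "\<And>u. u \<in> K \<Longrightarrow> P u = 0"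
  shows "P = 0"
proof (rule blinfun_eqI)
  fix x
  obtain u v where "u \<in> K" "v \<in> K" "x = u - v" using assms(1) unfolding generating_cone_def by blast
  then show "P x = blinfun_apply 0 x" using assms(2) by (simp add: blinfun.diff_right)
qed

lemma exists_positive_functional:
  assumes K: "closed_wedge K" and pointed: "\<And>x. x \<in> K \<Longrightarrow> - x \<in> K \<Longrightarrow> x = 0"
    and w: "w \<in> K" "w \<noteq> 0"
  obtains \<phi> where "\<phi> \<in> dual_cone K" and "0 < \<phi> w"
proof -
  have "- w \<notin> K" using pointed w by force
  then obtain \<phi> :: "'a \<Rightarrow>\<^sub>L real" where "\<forall>k\<in>K. 0 \<le> \<phi> k" "\<phi> (- w) < 0"
    using exists_separating_functional[OF K] by blast
  then show thesis by (intro that[of \<phi>]) (auto simp: dual_cone_def blinfun.minus_right)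
qed

lemma eigenfunctional_funpow:
  fixes A :: "'a::real_normed_vector \<Rightarrow>\<^sub>L 'a" and f :: "'a \<Rightarrow>\<^sub>L real"
  assumes "\<And>z. f (A z) = c * f z"
  shows "f ((blinfun_apply A ^^ n) x) = c ^ n * f x"
  by (induction n) (simp_all add: assms)

lemma strictly_positive_eigenfunctional:
  fixes A :: "'a::banach \<Rightarrow>\<^sub>L 'a"
  assumes K: "closed_wedge K" and gen: "generating_cone K"
    and pointed: "\<And>x. x \<in> K \<Longrightarrow> - x \<in> K \<Longrightarrow> x = 0"
    and A: "semi_nonsupporting K A" and pole: "resolvent_pole A (complex_of_real (op_spectral_radius A))"
  obtains f :: "'a \<Rightarrow>\<^sub>L real" where "\<And>z. f (A z) = op_spectral_radius A * f z"
    and "\<And>z. z \<in> K \<Longrightarrow> z \<noteq> 0 \<Longrightarrow> 0 < f z"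
proof -
  have A_pos: "positive_op K A" using A unfolding semi_nonsupporting_def by blast
  obtain P where "P \<noteq> 0" and P: "positive_op K P" and "A o\<^sub>L P = op_spectral_radius A *\<^sub>R P"
    and PA: "P o\<^sub>L A = op_spectral_radius A *\<^sub>R P"
    by (rule positive_eigenoperator_at_pole[OF K gen A_pos pole])
  then obtain x where x: "x \<in> K" "P x \<noteq> 0" using blinfun_eq_zero_on_generating_cone[OF gen] by blast
  moreover have "P x \<in> K" using P x(1) by (simp add: positive_op_def)
  ultimately obtain \<phi> where \<phi>: "\<phi> \<in> dual_cone K" "0 < \<phi> (P x)"
    using exists_positive_functional[OF K pointed] by blast
  define f where "f = \<phi> o\<^sub>L P"
  have f_dual: "f \<in> dual_cone K" using \<phi>(1) P by (simp add: f_def dual_cone_def positive_op_def)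
  have "f \<noteq> 0"
  proof
    assume "f = 0"
    then have "f x = 0" by simp
    with \<phi>(2) show False by (simp add: f_def)
  qed
  have eigen: "f (A z) = op_spectral_radius A * f z" for z
    using arg_cong[OF PA, of "\<lambda>S. \<phi> (S z)"] by (simp add: f_def blinfun.scaleR_left blinfun.scaleR_right)
  show thesis
  proof (rule that[OF eigen])
    fix z assume z: "z \<in> K" "z \<noteq> 0"
    have "z \<in> K - {0}" "f \<in> dual_cone K - {0}" using z f_dual \<open>f \<noteq> 0\<close> by simp_all
    then obtain n where "0 < f ((blinfun_apply A ^^ n) z)"
      using A unfolding semi_nonsupporting_def by blast
    moreover have "f ((blinfun_apply A ^^ n) z) = op_spectral_radius A ^ n * f z"
      by (rule eigenfunctional_funpow[OF eigen])
    moreover have "0 \<le> f z" using f_dual z by (simp add: dual_cone_def)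
    ultimately show "0 < f z" by (cases "f z = 0") auto
  qed
qed

lemma positive_eigenvector_at_pole:
  fixes B :: "'a::banach \<Rightarrow>\<^sub>L 'a"
  assumes K: "closed_wedge K" and gen: "generating_cone K" and B: "positive_op K B"
    and pole: "resolvent_pole B (complex_of_real (op_spectral_radius B))"
  obtains y where "y \<in> K" and "y \<noteq> 0" and "B y = op_spectral_radius B *\<^sub>R y"
proof -
  obtain P where "P \<noteq> 0" and P: "positive_op K P" and BP: "B o\<^sub>L P = op_spectral_radius B *\<^sub>R P"
    and "P o\<^sub>L B = op_spectral_radius B *\<^sub>R P"
    by (rule positive_eigenoperator_at_pole[OF K gen B pole])
  then obtain x where "x \<in> K" "P x \<noteq> 0" using blinfun_eq_zero_on_generating_cone[OF gen] by blast
  moreover have "B (P x) = op_spectral_radius B *\<^sub>R P x"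
    using arg_cong[OF BP, of "\<lambda>S. S x"] by (simp add: blinfun.scaleR_left)
  ultimately show thesis using P that[of "P x"] by (simp add: positive_op_def)
qed

lemma semi_nonsupporting_eigenvector_kernel:
  fixes A T :: "'a::banach \<Rightarrow>\<^sub>L 'a"
  assumes K: "closed_wedge K" and gen: "generating_cone K"
    and pointed: "\<And>x. x \<in> K \<Longrightarrow> - x \<in> K \<Longrightarrow> x = 0"
    and A: "semi_nonsupporting K A" and T: "positive_op K T"
    and x: "x \<in> K" "x \<noteq> 0" and eigen: "A x = \<mu> *\<^sub>R x" and Tx: "T x = 0"
  shows "T = 0"
proof (rule blinfun_eq_zero_on_generating_cone[OF gen], rule ccontr)
  fix u assume u: "u \<in> K" "T u \<noteq> 0"
  moreover have "T u \<in> K" using T u(1) by (simp add: positive_op_def)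
  ultimately obtain \<psi> where \<psi>: "\<psi> \<in> dual_cone K" "0 < \<psi> (T u)"
    using exists_positive_functional[OF K pointed] by blast
  define h where "h = \<psi> o\<^sub>L T"
  have "h \<in> dual_cone K" using \<psi>(1) T by (simp add: h_def dual_cone_def positive_op_def)
  moreover have "h \<noteq> 0"
  proof
    assume "h = 0"
    then have "h u = 0" by simp
    with \<psi>(2) show False by (simp add: h_def)
  qed
  ultimately have "x \<in> K - {0}" "h \<in> dual_cone K - {0}" using x by simp_all
  then obtain n where "0 < h ((blinfun_apply A ^^ n) x)"
    using A unfolding semi_nonsupporting_def by blast
  moreover have "(blinfun_apply A ^^ n) x = \<mu> ^ n *\<^sub>R x"
    by (induction n) (simp_all add: eigen blinfun.scaleR_right)
  ultimately show False by (simp add: h_def Tx blinfun.scaleR_right)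
qed

lemma spectral_radius_trichotomy_arith:
  fixes a b c \<rho> \<mu> :: real
  assumes "0 < a" "0 < b" "0 < c" and "c = a - b" and "\<rho> * a = b + \<mu> * c"
  shows "(\<rho> < \<mu> \<and> 1 < \<rho>) \<or> (\<mu> = \<rho> \<and> \<rho> = 1) \<or> (\<mu> < \<rho> \<and> \<rho> < 1)"
proof -
  have diff: "(\<rho> - \<mu>) * a = (1 - \<mu>) * b" and one: "(1 - \<rho>) * a = (1 - \<mu>) * c"
    using assms(5) unfolding assms(4) by (simp_all add: algebra_simps)
  consider "\<mu> < 1" | "\<mu> = 1" | "1 < \<mu>" by linarith
  then show ?thesis
  proof cases
    case 1
    then have "0 < (\<rho> - \<mu>) * a" "0 < (1 - \<rho>) * a"
      using assms(2,3) by (simp_all add: diff one)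
    then show ?thesis using assms(1) by (simp add: zero_less_mult_iff)
  next
    case 2
    then show ?thesis using one assms(1) by simp
  next
    case 3
    then have "(\<rho> - \<mu>) * a < 0" "(1 - \<rho>) * a < 0"
      using assms(2,3) by (simp_all add: diff one mult_neg_pos)
    then show ?thesis using assms(1) by (simp add: mult_less_0_iff)
  qed
qed

lemma spectral_radius_trichotomy:
  fixes A T F :: "'a::banach \<Rightarrow>\<^sub>L 'a" and f :: "'a \<Rightarrow>\<^sub>L real"
  assumes f_eigen: "\<And>z. f (A z) = \<rho> * f z" and f_pos: "\<And>z. z \<in> K \<Longrightarrow> z \<noteq> 0 \<Longrightarrow> 0 < f z"
    and split: "A = T + F" and x: "x \<in> K" "x \<noteq> 0" and Tx: "T x \<in> K" "T x \<noteq> 0"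
    and y: "x - T x \<in> K" "x - T x \<noteq> 0" and Fx: "F x = \<mu> *\<^sub>R (x - T x)"
  shows "(\<rho> < \<mu> \<and> 1 < \<rho>) \<or> (\<mu> = \<rho> \<and> \<rho> = 1) \<or> (\<mu> < \<rho> \<and> \<rho> < 1)"
proof (rule spectral_radius_trichotomy_arith)
  show "0 < f x" "0 < f (T x)" "0 < f (x - T x)" using f_pos x Tx y by simp_all
  show "f (x - T x) = f x - f (T x)" by (simp add: blinfun.diff_right)
  have "A x = T x + \<mu> *\<^sub>R (x - T x)" using Fx by (simp add: split blinfun.add_left)
  then show "\<rho> * f x = f (T x) + \<mu> * f (x - T x)"
    using f_eigen[of x] by (simp add: blinfun.add_right blinfun.scaleR_right)
qed

lemma eigenvector_through_inverse:
  fixes T F W :: "'a::real_normed_vector \<Rightarrow>\<^sub>L 'a"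
  assumes W: "is_inverse (id_blinfun - T) W" "positive_op K W"
    and y: "y \<in> K" "y \<noteq> 0" "F (W y) = \<mu> *\<^sub>R y"
  shows "W y \<in> K" and "W y \<noteq> 0" and "W y - T (W y) = y" and "F (W y) = \<mu> *\<^sub>R (W y - T (W y))"
proof -
  show eq: "W y - T (W y) = y"
    using arg_cong[OF conjunct2[OF W(1)[unfolded is_inverse_def]], of "\<lambda>S. S y"]
    by (simp add: blinfun.diff_left)
  show "W y \<in> K" using W(2) y(1) by (simp add: positive_op_def)
  show "W y \<noteq> 0" using eq y(2) by auto
  show "F (W y) = \<mu> *\<^sub>R (W y - T (W y))" using eq y(3) by simp
qed

theorem theorem3p7:
  fixes K :: "'a::banach set" and A T F :: "'a \<Rightarrow>\<^sub>L 'a"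
  assumes "is_cone K" and "generating_cone K" and "normal_cone K"
    and "positive_op K A" and "semi_nonsupporting K A"
    and "resolvent_pole A (complex_of_real (op_spectral_radius A))"
    and "A = T + F"
    and "positive_op K T" and "positive_op K F"
    and "op_spectral_radius T < 1" and "T \<noteq> 0"
    and "op_spectral_radius (F o\<^sub>L op_inverse (id_blinfun - T)) > 0"
    and "resolvent_pole (F o\<^sub>L op_inverse (id_blinfun - T))
           (complex_of_real (op_spectral_radius (F o\<^sub>L op_inverse (id_blinfun - T))))"
  shows "let R0 = op_spectral_radius (F o\<^sub>L op_inverse (id_blinfun - T)); rA = op_spectral_radius A;
             Pa = (R0 > rA \<and> rA > 1); Pb = (R0 = rA \<and> rA = 1); Pc = (R0 < rA \<and> rA < 1)
         in (Pa \<or> Pb \<or> Pc) \<and> \<not> (Pa \<and> Pb) \<and> \<not> (Pa \<and> Pc) \<and> \<not> (Pb \<and> Pc)"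
proof -
  have K: "closed_wedge K" using assms(1,2) by (rule closed_wedge_if_generating_cone)
  have pointed: "\<And>x. x \<in> K \<Longrightarrow> - x \<in> K \<Longrightarrow> x = 0" using assms(1) by (simp add: is_cone_def)
  define W where "W = op_inverse (id_blinfun - T)"
  define \<mu> where "\<mu> = op_spectral_radius (F o\<^sub>L W)"
  have W: "is_inverse (id_blinfun - T) W" "positive_op K W"
    unfolding W_def using op_inverse_id_minus_positive[OF K assms(2,8,10)] by simp_all
  obtain f :: "'a \<Rightarrow>\<^sub>L real" where f: "\<And>z. f (A z) = op_spectral_radius A * f z"
    "\<And>z. z \<in> K \<Longrightarrow> z \<noteq> 0 \<Longrightarrow> 0 < f z"
    using strictly_positive_eigenfunctional[OF K assms(2) pointed assms(5,6)] by blast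
  have "positive_op K (F o\<^sub>L W)" using assms(9) W(2) by (simp add: positive_op_def)
  then obtain y where "y \<in> K" "y \<noteq> 0" "F (W y) = \<mu> *\<^sub>R y"
    using positive_eigenvector_at_pole[OF K assms(2) _ assms(13)[folded W_def]] by (auto simp: \<mu>_def)
  note x = eigenvector_through_inverse[OF W this]
  have "T (W y) \<noteq> 0"
  proof
    assume Tx: "T (W y) = 0"
    then have "A (W y) = \<mu> *\<^sub>R W y" using x(4) by (simp add: assms(7) blinfun.add_left)
    then show False using semi_nonsupporting_eigenvector_kernel[OF K assms(2) pointed assms(5,8) x(1,2) _ Tx]
      assms(11) by blast
  qed
  then have "(op_spectral_radius A < \<mu> \<and> 1 < op_spectral_radius A) \<or> (\<mu> = op_spectral_radius A \<and> op_spectral_radius A = 1)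
      \<or> (\<mu> < op_spectral_radius A \<and> op_spectral_radius A < 1)"
    using assms(8) x \<open>y \<in> K\<close> \<open>y \<noteq> 0\<close>
    by (intro spectral_radius_trichotomy[OF f assms(7) x(1,2)]) (auto simp: positive_op_def)
  then show ?thesis unfolding Let_def \<mu>_def W_def by linarith
qed

end
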